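(* Let $d\in\mathbb{N}$, let $w(k)>0$, $k\in\mathbb{Z}^d$, be weights with $\sum_{k\in\mathbb{Z}^d}w(k)^{-2}<\infty$, and let $S^0_{1,\infty}B(\mathbb{T}^d)$ be normed with respect to an admissible one-dimensional $\psi$, with $c_\psi$ as in the context. Then for all $n\in\mathbb{N}$ $$c_\psi^{-d}\,a_n\big(I_d:\mathcal{M}(\mathbb{T}^d)\to F_d(1/w)\big)\le a_n\big(I_d:S^0_{1,\infty}B(\mathbb{T}^d)\to F_d(1/w)\big)\le 2^d\,a_n\big(I_d:\mathcal{B}(\mathbb{T}^d)\to F_d(1/w)\big).$$
   Context: $\mathbb{T}^d=[0,2\pi)^d$ with the normalized Lebesgue measure; $\hat f(k)=(2\pi)^{-d}\int_{\mathbb{T}^d}f(x)e^{-ik\cdot x}dx$. Periodic distributions are identified with formal Fourier series $\sum_k\hat g(k)e^{ik\cdot x}$ with polynomially bounded coefficients. For weights $v(k)>0$, $F_d(v)$ is the Hilbert space of periodic distributions $g$ with $\|g|F_d(v)\|=(\sum_k v(k)^2|\hat g(k)|^2)^{1/2}<\infty$; $1/w$ is the weight $k\mapsto 1/w(k)$. $\mathcal{B}(\mathbb{T}^d)$: $g$ with $\|g|\mathcal{B}\|=\sup_k|\hat g(k)|<\infty$. $\mathcal{M}(\mathbb{T}^d)$: complex Borel measures with total variation norm, identified with distributions via $\hat\mu(k)=\int_{\mathbb{T}^d}e^{-ik\cdot x}d\mu(x)$. Admissible one-dimensional $\psi$: real-valued nonnegative $\psi\in C_0^\infty(\mathbb{R})$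 supported in $[-3/2,3/2]$, $\psi(\xi/2)-\psi(\xi)\ge0$, $\psi=1$ on $[-1,1]$; $\varphi_0=\psi$, $\varphi_j(\xi)=\psi(2^{-j}\xi)-\psi(2^{-j+1}\xi)$ ($j\ge1$); $c_\psi:=\max_{j\in\{0,1\}}\frac{1}{2\pi}\int_{\mathbb{R}}|\int_{\mathbb{R}}\varphi_j(\xi)e^{ix\xi}d\xi|dx$. $S^0_{1,\infty}B(\mathbb{T}^d)$: periodic distributions $g$ with $\|g|S^0_{1,\infty}B\|=\sup_{\ell\in\mathbb{N}_0^d}\|\sum_k\prod_{j=1}^d\varphi_{\ell_j}(k_j)\hat g(k)e^{ik\cdot x}|L_1(\mathbb{T}^d)\|<\infty$. $I_d$ denotes inclusion maps; $a_n(T)=\inf\{\|T-A\|:\operatorname{rank}A<n\}$. *)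

theory Defs
  imports "HOL-Analysis.Analysis"
begin

text \<open>Periodic distributions on T^d are identified with their Fourier coefficient
  families indexed by Z^d, here modelled as int^'d (d = CARD('d)).\<close>

type_synonym 'd pdist = "int ^ 'd \<Rightarrow> complex"

definition tempered :: "'d::finite pdist \<Rightarrow> bool" where
  "tempered g \<longleftrightarrow> (\<exists>C (N::nat). \<forall>k. norm (g k) \<le> C * (1 + (\<Sum>i\<in>UNIV. real_of_int \<bar>k $ i\<bar>)) ^ N)"

definition torus :: "(real ^ 'd::finite) set" where
  "torus = {x. \<forall>i. 0 \<le> x $ i \<and> x $ i < 2 * pi}"

definition kdot :: "int ^ 'd::finite \<Rightarrow> real ^ 'd \<Rightarrow> real" where
  "kdot k x = (\<Sum>i\<in>UNIV. real_of_int (k $ i) * x $ i)"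

type_synonym 'd dspace = "'d pdist set \<times> ('d pdist \<Rightarrow> real)"

text \<open>F_d(1/w): weight v(k) = 1/w(k).\<close>
definition Fspace :: "(int ^ 'd::finite \<Rightarrow> real) \<Rightarrow> 'd dspace" where
  "Fspace w = ({g. tempered g \<and> (\<lambda>k. (norm (g k))\<^sup>2 / (w k)\<^sup>2) summable_on UNIV},
               (\<lambda>g. sqrt (\<Sum>\<^sub>\<infinity>k. (norm (g k))\<^sup>2 / (w k)\<^sup>2)))"

definition Bspace :: "'d::finite dspace" where
  "Bspace = ({g. tempered g \<and> bdd_above (range (\<lambda>k. norm (g k)))},
             (\<lambda>g. SUP k. norm (g k)))"

text \<open>Complex Borel measures on T^d, represented by polar form h \<cdot> \<nu> with \<nu> a finite
  positive Borel measure concentrated on T^d and h \<in> L_1(\<nu>); the total variation is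
  \<integral>|h| d\<nu> (minimised over representations; equal to |\<mu>| for the polar decomposition).\<close>
definition meas_repr :: "'d::finite pdist \<Rightarrow> (real ^ 'd) measure \<Rightarrow> (real ^ 'd \<Rightarrow> complex) \<Rightarrow> bool" where
  "meas_repr g \<nu> h \<longleftrightarrow> sets \<nu> = sets borel \<and> finite_measure \<nu> \<and> emeasure \<nu> (UNIV - torus) = 0
     \<and> integrable \<nu> h \<and> (\<forall>k. g k = (\<integral>x. h x * cis (- kdot k x) \<partial>\<nu>))"

definition Mspace :: "'d::finite dspace" where
  "Mspace = ({g. \<exists>\<nu> h. meas_repr g \<nu> h},
             (\<lambda>g. Inf {(\<integral>x. norm (h x) \<partial>\<nu>) | \<nu> h. meas_repr g \<nu> h}))"

definition smooth :: "(real \<Rightarrow> real) \<Rightarrow> bool" where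
  "smooth f \<longleftrightarrow> (\<exists>D. D 0 = f \<and> (\<forall>n x. (D n has_real_derivative D (Suc n) x) (at x)))"

definition admissible :: "(real \<Rightarrow> real) \<Rightarrow> bool" where
  "admissible \<psi> \<longleftrightarrow> smooth \<psi> \<and> (\<forall>\<xi>. 0 \<le> \<psi> \<xi>) \<and> (\<forall>\<xi>. \<bar>\<xi>\<bar> > 3/2 \<longrightarrow> \<psi> \<xi> = 0)
     \<and> (\<forall>\<xi>. \<psi> (\<xi>/2) - \<psi> \<xi> \<ge> 0) \<and> (\<forall>\<xi>. \<bar>\<xi>\<bar> \<le> 1 \<longrightarrow> \<psi> \<xi> = 1)"

definition phi :: "(real \<Rightarrow> real) \<Rightarrow> nat \<Rightarrow> real \<Rightarrow> real" where
  "phi \<psi> j \<xi> = (if j = 0 then \<psi> \<xi> else \<psi> (\<xi> / 2 ^ j) - \<psi> (\<xi> / 2 ^ (j - 1)))"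

definition c_psi :: "(real \<Rightarrow> real) \<Rightarrow> real" where
  "c_psi \<psi> = Max ((\<lambda>j. 1 / (2 * pi) *
      (\<integral>x. norm (\<integral>\<xi>. complex_of_real (phi \<psi> j \<xi>) * cis (x * \<xi>) \<partial>lborel) \<partial>lborel)) ` {0, 1})"

text \<open>Dyadic block l of g: the trigonometric polynomial
  \<Sum>_k \<Prod>_j phi_{l_j}(k_j) g(k) e^{ik\<cdot>x} (the sum is over the box containing the support).\<close>
definition block :: "(real \<Rightarrow> real) \<Rightarrow> 'd::finite pdist \<Rightarrow> ('d \<Rightarrow> nat) \<Rightarrow> real ^ 'd \<Rightarrow> complex" where
  "block \<psi> g l x = (\<Sum>k\<in>{k. \<forall>j. \<bar>k $ j\<bar> \<le> 2 ^ (l j + 1)}.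
      complex_of_real (\<Prod>j\<in>UNIV. phi \<psi> (l j) (real_of_int (k $ j))) * g k * cis (kdot k x))"

definition L1norm :: "(real ^ 'd::finite \<Rightarrow> complex) \<Rightarrow> real" where
  "L1norm f = (1 / (2 * pi) ^ CARD('d)) * (\<integral>x\<in>torus. norm (f x) \<partial>lborel)"

definition Sspace :: "(real \<Rightarrow> real) \<Rightarrow> 'd::finite dspace" where
  "Sspace \<psi> = ({g. tempered g \<and> bdd_above (range (\<lambda>l. L1norm (block \<psi> g l)))},
               (\<lambda>g. SUP l. L1norm (block \<psi> g l)))"

definition clinear_on :: "'d::finite pdist set \<Rightarrow> ('d pdist \<Rightarrow> 'd pdist) \<Rightarrow> bool" where
  "clinear_on X A \<longleftrightarrow> (\<forall>f\<in>X. \<forall>g\<in>X. A (\<lambda>k. f k + g k) = (\<lambda>k. A f k + A g k))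
     \<and> (\<forall>f\<in>X. \<forall>c::complex. A (\<lambda>k. c * f k) = (\<lambda>k. c * A f k))"

definition cspan_fun :: "'d::finite pdist set \<Rightarrow> 'd pdist set" where
  "cspan_fun B = {(\<lambda>k. \<Sum>b\<in>B. c b * b k) | c. True}"

definition rank_lt :: "'d::finite pdist set \<Rightarrow> ('d pdist \<Rightarrow> 'd pdist) \<Rightarrow> nat \<Rightarrow> bool" where
  "rank_lt X A n \<longleftrightarrow> (\<exists>B. finite B \<and> card B < n \<and> A ` X \<subseteq> cspan_fun B)"

definition incl_diff_norm :: "'d::finite dspace \<Rightarrow> 'd dspace \<Rightarrow> ('d pdist \<Rightarrow> 'd pdist) \<Rightarrow> ereal" where
  "incl_diff_norm X Y A = (SUP g\<in>{g\<in>fst X. snd X g \<le> 1}. ereal (snd Y (\<lambda>k. g k - A g k)))"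

definition approx_num :: "nat \<Rightarrow> 'd::finite dspace \<Rightarrow> 'd dspace \<Rightarrow> ereal" where
  "approx_num n X Y = (INF A\<in>{A. clinear_on (fst X) A \<and> A ` fst X \<subseteq> fst Y \<and> rank_lt (fst X) A n}.
      incl_diff_norm X Y A)"

end

theory Submission
  imports Defs "HOL-Probability.Sinc_Integral"
begin

(* Both inequalities come from continuous embeddings M into S^0_{1,oo}B into B with norms at most
   c_psi^d and 2^d: rescaling unit balls shows that the approximation numbers of the inclusion into
   F_d(1/w) can only grow by the norm of such an embedding.

   For M into S, the l-th dyadic block of a measure mu is the convolution of mu with a tensor
   product of the trigonometric polynomials sum_k phi_j(k) e^(ikt), so by Young's inequality it
   suffices to bound their L_1 norm over a period by the L_1 norm of the Fourier integral of phi_j.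
   This is Poisson summation, made rigorous with Fejer means of the periodization and Fatou's
   lemma; the L_1 norm of the Fourier integral is invariant under the dilations relating the levels
   j >= 1, so the levels j = 0, 1 entering c_psi suffice.

   For S into B, each Fourier coefficient of a block is bounded by the L_1 norm of the block, and
   every frequency k lies in at most 2^d blocks, whose weights prod_j phi_(l_j)(k_j) sum to one. *)

section \<open>The Fejer kernel of period one\<close>

lemma sum_int_interval_symmetric:
  "(\<Sum>j\<in>{-int n..int n}. f j) = f 0 + (\<Sum>m=1..n. f (int m) + f (- int m))"
proof (induction n)
  case (Suc n)
  have "{-int (Suc n)..int (Suc n)} = insert (int (Suc n)) (insert (- int (Suc n)) {-int n..int n})"
    by auto
  then show ?case
    using Suc by (simp add: algebra_simps)
qed simp

definition dirichlet_kernel :: "nat \<Rightarrow> real \<Rightarrow> real" where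
  "dirichlet_kernel n \<xi> = (\<Sum>j\<in>{-int n..int n}. cos (2 * pi * of_int j * \<xi>))"

definition fejer_kernel :: "nat \<Rightarrow> real \<Rightarrow> real" where
  "fejer_kernel M \<xi> = (\<Sum>n\<le>M. dirichlet_kernel n \<xi>) / (real M + 1)"

lemma dirichlet_kernel_cos_sum:
  "dirichlet_kernel n \<xi> = 1 + 2 * (\<Sum>m=1..n. cos (2 * pi * real m * \<xi>))"
  unfolding dirichlet_kernel_def by (subst sum_int_interval_symmetric) (simp add: sum_distrib_left)

lemma dirichlet_kernel_cis_sum:
  "complex_of_real (dirichlet_kernel n \<xi>) = (\<Sum>j\<in>{-int n..int n}. cis (2 * pi * of_int j * \<xi>))"
proof -
  have "(\<Sum>j\<in>{-int n..int n}. cis (2 * pi * of_int j * \<xi>))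
       = 1 + (\<Sum>m=1..n. cis (2 * pi * real m * \<xi>) + cis (- (2 * pi * real m * \<xi>)))"
    by (subst sum_int_interval_symmetric) simp
  also have "\<dots> = 1 + (\<Sum>m=1..n. complex_of_real (2 * cos (2 * pi * real m * \<xi>)))"
    by (intro arg_cong2[where f="(+)"] sum.cong refl) (simp add: cis.ctr complex_eq_iff)
  finally show ?thesis
    by (simp add: dirichlet_kernel_cos_sum sum_distrib_left)
qed

lemma dirichlet_kernel_mult_sin:
  "dirichlet_kernel n \<xi> * sin (pi * \<xi>) = sin ((2 * real n + 1) * pi * \<xi>)"
proof (induction n)
  case (Suc n)
  have "(2 * real (Suc n) + 1) * pi * \<xi> = 2 * pi * real (Suc n) * \<xi> + pi * \<xi>"
    and "(2 * real n + 1) * pi * \<xi> = 2 * pi * real (Suc n) * \<xi> - pi * \<xi>"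
    by (simp_all add: algebra_simps)
  then have "2 * cos (2 * pi * real (Suc n) * \<xi>) * sin (pi * \<xi>)
      = sin ((2 * real (Suc n) + 1) * pi * \<xi>) - sin ((2 * real n + 1) * pi * \<xi>)"
    by (simp only: sin_add sin_diff)
  then show ?case
    using Suc by (simp add: dirichlet_kernel_cos_sum algebra_simps)
qed (simp add: dirichlet_kernel_cos_sum)

lemma sum_sin_odd_mult_sin:
  "(\<Sum>n\<le>M. sin ((2 * real n + 1) * t)) * sin t = (sin ((real M + 1) * t))\<^sup>2"
proof (induction M)
  case (Suc M)
  have "(2 * real M + 2) * t = (2 * real M + 3) * t - t"
    and "(2 * real M + 4) * t = (2 * real M + 3) * t + t"
    by (simp_all add: algebra_simps)
  then have "sin ((2 * real M + 3) * t) * sin t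
      = (cos ((2 * real M + 2) * t) - cos ((2 * real M + 4) * t)) / 2"
    by (simp only: cos_add cos_diff) simp
  moreover have "(sin ((real M + 2) * t))\<^sup>2 = (1 - cos ((2 * real M + 4) * t)) / 2"
    and "(sin ((real M + 1) * t))\<^sup>2 = (1 - cos ((2 * real M + 2) * t)) / 2"
    using cos_double_sin[of "(real M + 2) * t"] cos_double_sin[of "(real M + 1) * t"]
    by (simp_all add: algebra_simps)
  ultimately show ?case
    using Suc by (simp add: algebra_simps)
qed (simp add: power2_eq_square)

lemma fejer_kernel_mult_sin_square:
  "fejer_kernel M \<xi> * (sin (pi * \<xi>))\<^sup>2 = (sin ((real M + 1) * pi * \<xi>))\<^sup>2 / (real M + 1)"
proof -
  have "(\<Sum>n\<le>M. dirichlet_kernel n \<xi>) * (sin (pi * \<xi>))\<^sup>2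
      = (\<Sum>n\<le>M. dirichlet_kernel n \<xi> * sin (pi * \<xi>)) * sin (pi * \<xi>)"
    by (simp add: sum_distrib_right power2_eq_square mult.assoc)
  also have "\<dots> = (sin ((real M + 1) * pi * \<xi>))\<^sup>2"
    using sum_sin_odd_mult_sin[where M=M and t="pi * \<xi>"] by (simp add: dirichlet_kernel_mult_sin mult.assoc)
  finally show ?thesis
    by (simp add: fejer_kernel_def)
qed

lemma fejer_kernel_eq_sin_quotient:
  "sin (pi * \<xi>) \<noteq> 0 \<Longrightarrow>
    fejer_kernel M \<xi> = (sin ((real M + 1) * pi * \<xi>))\<^sup>2 / ((real M + 1) * (sin (pi * \<xi>))\<^sup>2)"
  using fejer_kernel_mult_sin_square[of M \<xi>] by (simp add: eq_divide_eq mult_ac)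

lemma fejer_kernel_nonneg: "0 \<le> fejer_kernel M \<xi>"
proof (cases "sin (pi * \<xi>) = 0")
  case True
  then have "\<xi> \<in> \<int>"
    using sin_times_pi_eq_0[of \<xi>] by (simp add: mult.commute)
  then have "cos (2 * pi * of_int j * \<xi>) = 1" for j :: int
    by (metis Ints_cases Ints_mult Ints_of_int cos_int_2pin mult.assoc)
  then show ?thesis
    by (simp add: fejer_kernel_def dirichlet_kernel_def sum_nonneg)
qed (simp add: fejer_kernel_eq_sin_quotient)

lemma fejer_kernel_le_away_from_integers:
  fixes k :: int and \<xi> d :: real
  assumes "0 < d" "d \<le> 1/2" "d \<le> \<bar>\<xi> - k\<bar>" "\<bar>\<xi> - k\<bar> \<le> 1/2"
  shows "fejer_kernel M \<xi> \<le> 1 / ((real M + 1) * (sin (pi * d))\<^sup>2)"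
proof -
  define u where "u = \<xi> - k"
  have "sin (pi * \<xi>) = sin (pi * u) * cos (pi * k)"
    unfolding u_def by (simp add: algebra_simps sin_diff sin_add)
  moreover have "(cos (pi * k))\<^sup>2 = 1"
    using sin_npi_int[of k] sin_cos_squared_add[of "pi * k"] by (simp add: mult.commute)
  ultimately have sin_eq: "(sin (pi * \<xi>))\<^sup>2 = (sin (pi * \<bar>u\<bar>))\<^sup>2"
    by (cases "u \<ge> 0") (simp_all add: power_mult_distrib)
  have "pi * d \<le> pi * \<bar>u\<bar>" "pi * \<bar>u\<bar> \<le> pi * (1/2)" "0 \<le> pi * d"
    using assms by (simp_all add: u_def)
  then have "sin (pi * d) \<le> sin (pi * \<bar>u\<bar>)"
    using pi_gt_zero by (intro sin_monotone_2pi_le) linarith+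
  moreover have "0 < sin (pi * d)"
    using assms by (intro sin_gt_zero) auto
  ultimately have le: "(sin (pi * d))\<^sup>2 \<le> (sin (pi * \<xi>))\<^sup>2"
    unfolding sin_eq by (simp add: power_mono)
  with \<open>0 < sin (pi * d)\<close> have "sin (pi * \<xi>) \<noteq> 0"
    by (metis power_zero_numeral zero_less_power2 order.strict_trans2 less_irrefl)
  then have "fejer_kernel M \<xi> \<le> 1 / ((real M + 1) * (sin (pi * \<xi>))\<^sup>2)"
    by (simp add: fejer_kernel_eq_sin_quotient divide_right_mono abs_square_le_1 del: divide_divide_eq_left)
  also have "\<dots> \<le> 1 / ((real M + 1) * (sin (pi * d))\<^sup>2)"
    using le \<open>0 < sin (pi * d)\<close> by (intro divide_left_mono mult_left_mono mult_pos_pos) auto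
  finally show ?thesis .
qed

lemma continuous_on_dirichlet_kernel [continuous_intros]: "continuous_on A (dirichlet_kernel n)"
  unfolding dirichlet_kernel_def by (intro continuous_intros)

lemma continuous_on_fejer_kernel [continuous_intros]: "continuous_on A (fejer_kernel M)"
  unfolding fejer_kernel_def by (intro continuous_intros) auto

lemma borel_measurable_fejer_kernel [measurable]: "fejer_kernel M \<in> borel_measurable borel"
  by (rule borel_measurable_continuous_onI) (intro continuous_intros)

lemma integrable_indicator_Icc_mult:
  fixes f :: "real \<Rightarrow> 'a::{banach, second_countable_topology, real_normed_algebra_1}"
  assumes "continuous_on {a..b} f"
  shows "integrable lborel (\<lambda>x. indicator {a..b} x * f x)"
proof -
  have "(\<lambda>x. indicator {a..b} x * f x) = (\<lambda>x. indicator {a..b} x *\<^sub>R f x)"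
    by (auto simp: fun_eq_iff indicator_def)
  then show ?thesis
    using borel_integrable_atLeastAtMost'[OF assms] unfolding set_integrable_def by simp
qed

lemma integral_cos_unit_interval:
  fixes j :: int
  assumes "a \<in> \<int>"
  shows "(\<integral>\<xi>. indicator {a-1/2..a+1/2} \<xi> * cos (2 * pi * of_int j * \<xi>) \<partial>lborel) = (if j = 0 then 1 else 0)"
proof (cases "j = 0")
  case True
  have "(\<integral>\<xi>. indicator {a-1/2..a+1/2} \<xi> *\<^sub>R (1::real) \<partial>lborel) = (a+1/2) - (a-1/2)"
    by (rule integral_FTC_atLeastAtMost[where F="\<lambda>x. x"]) (auto intro!: derivative_eq_intros)
  then show ?thesis
    using True by simp
next
  case False
  obtain k where k: "a = of_int k"
    using assms Ints_cases by blast
  define F where "F \<xi> = sin (2 * pi * of_int j * \<xi>) / (2 * pi * of_int j)" for \<xi>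
  have "(\<integral>\<xi>. indicator {a-1/2..a+1/2} \<xi> *\<^sub>R cos (2 * pi * of_int j * \<xi>) \<partial>lborel) = F (a+1/2) - F (a-1/2)"
  proof (rule integral_FTC_atLeastAtMost)
    fix x :: real
    have "(F has_real_derivative cos (2 * pi * of_int j * x)) (at x within {a-1/2..a+1/2})"
      unfolding F_def using False by (auto intro!: derivative_eq_intros)
    then show "(F has_vector_derivative cos (2 * pi * of_int j * x)) (at x within {a-1/2..a+1/2})"
      by (simp add: has_real_derivative_iff_has_vector_derivative)
  qed (auto intro!: continuous_intros)
  moreover have "2 * pi * of_int j * (a+1/2) = pi * of_int (2*j*k + j)"
    and "2 * pi * of_int j * (a-1/2) = pi * of_int (2*j*k - j)"
    by (simp_all add: k algebra_simps)
  then have "F (a+1/2) = 0" "F (a-1/2) = 0"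
    unfolding F_def by (simp_all only: sin_npi_int)
  ultimately show ?thesis
    using False by simp
qed

lemma integral_dirichlet_kernel_unit_interval:
  assumes "a \<in> \<int>"
  shows "(\<integral>\<xi>. indicator {a-1/2..a+1/2} \<xi> * dirichlet_kernel n \<xi> \<partial>lborel) = 1"
proof -
  have "(\<integral>\<xi>. indicator {a-1/2..a+1/2} \<xi> * dirichlet_kernel n \<xi> \<partial>lborel)
      = (\<Sum>j\<in>{-int n..int n}. \<integral>\<xi>. indicator {a-1/2..a+1/2} \<xi> * cos (2 * pi * of_int j * \<xi>) \<partial>lborel)"
    unfolding dirichlet_kernel_def sum_distrib_left
    by (subst Bochner_Integration.integral_sum)
       (auto intro!: integrable_indicator_Icc_mult continuous_intros)
  also have "\<dots> = 1"
    using assms by (simp add: integral_cos_unit_interval)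
  finally show ?thesis .
qed

lemma integral_fejer_kernel_unit_interval:
  assumes "a \<in> \<int>"
  shows "(\<integral>\<xi>. indicator {a-1/2..a+1/2} \<xi> * fejer_kernel M \<xi> \<partial>lborel) = 1"
proof -
  have "(\<integral>\<xi>. indicator {a-1/2..a+1/2} \<xi> * fejer_kernel M \<xi> \<partial>lborel)
      = (\<Sum>n\<le>M. \<integral>\<xi>. indicator {a-1/2..a+1/2} \<xi> * dirichlet_kernel n \<xi> \<partial>lborel) / (real M + 1)"
    unfolding fejer_kernel_def sum_distrib_left times_divide_eq_right integral_divide_zero
    by (subst Bochner_Integration.integral_sum)
       (auto intro!: integrable_indicator_Icc_mult continuous_intros)
  also have "\<dots> = 1"
    using assms by (simp add: integral_dirichlet_kernel_unit_interval)
  finally show ?thesis .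
qed

lemma fejer_kernel_mult_le:
  fixes k :: int and \<xi> d :: real
  assumes "0 < d" "d \<le> 1/2" "\<bar>\<xi> - k\<bar> \<le> 1/2"
    and "\<bar>\<xi> - k\<bar> < d \<Longrightarrow> e \<le> \<epsilon>" "0 \<le> e" "e \<le> B" "0 \<le> \<epsilon>"
  shows "fejer_kernel M \<xi> * e \<le> \<epsilon> * fejer_kernel M \<xi> + B / ((real M + 1) * (sin (pi * d))\<^sup>2)"
proof (cases "\<bar>\<xi> - k\<bar> < d")
  case True
  then have "fejer_kernel M \<xi> * e \<le> \<epsilon> * fejer_kernel M \<xi>"
    using assms fejer_kernel_nonneg[of M \<xi>] by (subst mult.commute) (intro mult_left_mono)
  moreover have "0 \<le> B / ((real M + 1) * (sin (pi * d))\<^sup>2)"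
    using assms by simp
  ultimately show ?thesis
    by linarith
next
  case False
  then have "fejer_kernel M \<xi> \<le> 1 / ((real M + 1) * (sin (pi * d))\<^sup>2)"
    using assms by (intro fejer_kernel_le_away_from_integers) auto
  then have "fejer_kernel M \<xi> * e \<le> 1 / ((real M + 1) * (sin (pi * d))\<^sup>2) * B"
    using assms by (intro mult_mono) (auto simp: fejer_kernel_nonneg)
  moreover have "0 \<le> \<epsilon> * fejer_kernel M \<xi>"
    using assms by (simp add: fejer_kernel_nonneg)
  ultimately show ?thesis
    by (metis add_increasing mult.commute times_divide_eq_right mult_1_right)
qed

lemma norm_integral_fejer_kernel_localized_le:
  fixes g :: "real \<Rightarrow> complex" and k :: int and d \<epsilon> B :: real
  assumes cont: "continuous_on UNIV g" and d: "0 < d" "d \<le> 1/2" and "0 \<le> \<epsilon>"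
    and near: "\<And>\<xi>::real. \<bar>\<xi> - k\<bar> < d \<Longrightarrow> norm (g \<xi> - g k) \<le> \<epsilon>"
    and bound: "\<And>\<xi>::real. \<bar>\<xi> - k\<bar> \<le> 1/2 \<Longrightarrow> norm (g \<xi> - g k) \<le> B"
  shows "norm (\<integral>\<xi>. indicator {k-1/2..k+1/2} \<xi> * (fejer_kernel M \<xi> * (g \<xi> - g k)) \<partial>lborel)
    \<le> \<epsilon> + B / ((real M + 1) * (sin (pi * d))\<^sup>2)"
proof -
  define I where "I = {real_of_int k - 1/2..k+1/2}"
  define c where "c = B / ((real M + 1) * (sin (pi * d))\<^sup>2)"
  have I: "\<xi> \<in> I \<longleftrightarrow> \<bar>\<xi> - k\<bar> \<le> 1/2" for \<xi>
    unfolding I_def abs_le_iff by auto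
  have "norm (\<integral>\<xi>. indicator I \<xi> * (fejer_kernel M \<xi> * (g \<xi> - g k)) \<partial>lborel)
      \<le> (\<integral>\<xi>. norm (indicator I \<xi> * (fejer_kernel M \<xi> * (g \<xi> - g k))) \<partial>lborel)"
    by (rule integral_norm_bound)
  also have "\<dots> \<le> (\<integral>\<xi>. indicator I \<xi> * (\<epsilon> * fejer_kernel M \<xi> + c) \<partial>lborel)"
  proof (rule integral_mono)
    show "integrable lborel (\<lambda>\<xi>. norm (indicator I \<xi> * (fejer_kernel M \<xi> * (g \<xi> - g k))))"
      unfolding I_def
      by (intro integrable_norm integrable_indicator_Icc_mult continuous_intros
          continuous_on_subset[OF cont]) auto
    show "integrable lborel (\<lambda>\<xi>. indicator I \<xi> * (\<epsilon> * fejer_kernel M \<xi> + c))"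
      unfolding I_def by (intro integrable_indicator_Icc_mult continuous_intros)
    fix \<xi> :: real
    have "fejer_kernel M \<xi> * norm (g \<xi> - g k) \<le> \<epsilon> * fejer_kernel M \<xi> + c" if "\<xi> \<in> I"
      unfolding c_def using that assms by (intro fejer_kernel_mult_le) (auto simp: I)
    then show "norm (indicator I \<xi> * (fejer_kernel M \<xi> * (g \<xi> - g k)))
        \<le> indicator I \<xi> * (\<epsilon> * fejer_kernel M \<xi> + c)"
      by (cases "\<xi> \<in> I") (simp_all add: norm_mult fejer_kernel_nonneg)
  qed
  also have "\<dots> = \<epsilon> * (\<integral>\<xi>. indicator I \<xi> * fejer_kernel M \<xi> \<partial>lborel) + c * (\<integral>\<xi>. indicator I \<xi> \<partial>lborel)"
    unfolding distrib_left
    by (subst Bochner_Integration.integral_add)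
       (auto simp: I_def mult.left_commute intro!: integrable_indicator_Icc_mult continuous_intros)
  also have "\<dots> = \<epsilon> + c"
    using integral_fejer_kernel_unit_interval[of "of_int k" M] by (simp add: I_def)
  finally show ?thesis
    by (simp add: I_def c_def)
qed

lemma fejer_kernel_localized_tendsto_zero:
  fixes g :: "real \<Rightarrow> complex" and k :: int
  assumes cont: "continuous_on UNIV g"
  shows "(\<lambda>M. \<integral>\<xi>. indicator {k-1/2..k+1/2} \<xi> * (fejer_kernel M \<xi> * (g \<xi> - g k)) \<partial>lborel) \<longlonglongrightarrow> 0"
proof (rule LIMSEQ_I)
  fix r :: real
  assume r: "0 < r"
  have "\<forall>e>0. \<exists>\<delta>>0. \<forall>\<xi>. dist \<xi> k < \<delta> \<longrightarrow> dist (g \<xi>) (g k) < e"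
    using cont unfolding continuous_on_iff by blast
  then obtain \<delta> where \<delta>: "\<delta> > 0" "\<And>\<xi>. dist \<xi> k < \<delta> \<Longrightarrow> dist (g \<xi>) (g k) < r/2"
    using r half_gt_zero by blast
  define d where "d = min \<delta> (1/2)"
  have d: "0 < d" "d \<le> 1/2"
    using \<delta> by (auto simp: d_def)
  have near: "norm (g \<xi> - g k) \<le> r/2" if "\<bar>\<xi> - k\<bar> < d" for \<xi> :: real
    using that \<delta>(2)[of \<xi>] by (simp add: d_def dist_norm dist_real_def)
  have "compact ((\<lambda>\<xi>. g \<xi> - g k) ` {k-1/2..k+1/2})"
    by (intro compact_continuous_image continuous_intros continuous_on_subset[OF cont]) auto
  then have "bounded ((\<lambda>\<xi>. g \<xi> - g k) ` {k-1/2..k+1/2})"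
    by (rule compact_imp_bounded)
  then obtain B where "B > 0" "\<And>\<xi>. \<xi> \<in> {k-1/2..k+1/2} \<Longrightarrow> norm (g \<xi> - g k) \<le> B"
    unfolding bounded_pos by blast
  then have bound: "norm (g \<xi> - g k) \<le> B" if "\<bar>\<xi> - k\<bar> \<le> 1/2" for \<xi> :: real
    using that unfolding abs_le_iff by auto
  define s where "s = (sin (pi * d))\<^sup>2"
  have "0 < sin (pi * d)"
    using d by (intro sin_gt_zero) auto
  then have "0 < s"
    by (simp add: s_def)
  obtain M0 :: nat where M0: "B / s / (r/2) < real M0"
    using reals_Archimedean2 by blast
  show "\<exists>M0. \<forall>M\<ge>M0. norm ((\<integral>\<xi>. indicator {k-1/2..k+1/2} \<xi> * (fejer_kernel M \<xi> * (g \<xi> - g k)) \<partial>lborel) - 0) < r"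
  proof (intro exI allI impI)
    fix M
    assume "M0 \<le> M"
    with M0 have "B / s / (r/2) < real M + 1"
      by (smt (verit) of_nat_mono)
    then have "B < r/2 * ((real M + 1) * s)"
      using r \<open>0 < s\<close> by (simp add: field_simps)
    then have "B / ((real M + 1) * s) < r/2"
      using \<open>0 < s\<close> by (simp add: divide_less_eq mult_ac)
    moreover have "norm (\<integral>\<xi>. indicator {k-1/2..k+1/2} \<xi> * (fejer_kernel M \<xi> * (g \<xi> - g k)) \<partial>lborel)
        \<le> r/2 + B / ((real M + 1) * s)"
      unfolding s_def using r by (intro norm_integral_fejer_kernel_localized_le[OF cont d _ near bound]) auto
    ultimately show "norm ((\<integral>\<xi>. indicator {k-1/2..k+1/2} \<xi> * (fejer_kernel M \<xi> * (g \<xi> - g k)) \<partial>lborel) - 0) < r"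
      by (simp only: diff_zero)
  qed
qed

lemma fejer_kernel_localized_tendsto:
  fixes g :: "real \<Rightarrow> complex" and k :: int
  assumes cont: "continuous_on UNIV g"
  shows "(\<lambda>M. \<integral>\<xi>. indicator {k-1/2..k+1/2} \<xi> * (fejer_kernel M \<xi> * g \<xi>) \<partial>lborel) \<longlonglongrightarrow> g k"
proof -
  let ?I = "{real_of_int k - 1/2..real_of_int k + 1/2}"
  have "(\<integral>\<xi>. indicator ?I \<xi> * (fejer_kernel M \<xi> * g \<xi>) \<partial>lborel)
      = (\<integral>\<xi>. indicator ?I \<xi> * (fejer_kernel M \<xi> * (g \<xi> - g k)) \<partial>lborel)
        + (\<integral>\<xi>. indicator ?I \<xi> * fejer_kernel M \<xi> \<partial>lborel) * g k" for M
  proof -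
    have "(\<integral>\<xi>. indicator ?I \<xi> * (fejer_kernel M \<xi> * g \<xi>) \<partial>lborel)
        = (\<integral>\<xi>. indicator ?I \<xi> * (fejer_kernel M \<xi> * (g \<xi> - g k)) + indicator ?I \<xi> * (fejer_kernel M \<xi> * g k) \<partial>lborel)"
      by (intro Bochner_Integration.integral_cong) (simp_all add: algebra_simps)
    also have "\<dots> = (\<integral>\<xi>. indicator ?I \<xi> * (fejer_kernel M \<xi> * (g \<xi> - g k)) \<partial>lborel)
        + (\<integral>\<xi>. indicator ?I \<xi> * (fejer_kernel M \<xi> * g k) \<partial>lborel)"
      by (intro Bochner_Integration.integral_add integrable_indicator_Icc_mult continuous_intros
          continuous_on_subset[OF cont]) simp
    also have "(\<lambda>\<xi>. indicator ?I \<xi> * (fejer_kernel M \<xi> * g k))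
        = (\<lambda>\<xi>. complex_of_real (indicator ?I \<xi> * fejer_kernel M \<xi>) * g k)"
      by (auto simp: fun_eq_iff indicator_def)
    finally show ?thesis
      by (simp only: integral_mult_left_zero integral_complex_of_real)
  qed
  moreover have "(\<lambda>M. (\<integral>\<xi>. indicator ?I \<xi> * (fejer_kernel M \<xi> * (g \<xi> - g k)) \<partial>lborel)
        + (\<integral>\<xi>. indicator ?I \<xi> * fejer_kernel M \<xi> \<partial>lborel) * g k) \<longlonglongrightarrow> 0 + 1 * g k"
    using fejer_kernel_localized_tendsto_zero[OF cont, of k]
    by (intro tendsto_add tendsto_mult tendsto_const)
       (simp_all add: integral_fejer_kernel_unit_interval)
  ultimately show ?thesis
    by simp
qed

lemma sum_indicator_unit_intervals:
  assumes "\<bar>\<xi>\<bar> \<le> real N"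
  shows "(\<Sum>k\<in>{-int N..int N}. indicator {real_of_int k - 1/2..<real_of_int k + 1/2} \<xi> :: 'a::comm_ring_1) = 1"
proof -
  define k0 where "k0 = \<lfloor>\<xi> + 1/2\<rfloor>"
  have "\<xi> \<in> {real_of_int k - 1/2..<real_of_int k + 1/2} \<longleftrightarrow> k0 = k" for k
    unfolding k0_def floor_eq_iff by auto
  then have "indicator {real_of_int k - 1/2..<real_of_int k + 1/2} \<xi> = (if k = k0 then 1 else (0::'a))" for k
    by (auto simp: indicator_def)
  moreover have "k0 \<in> {-int N..int N}"
    using assms unfolding k0_def by (auto simp: abs_le_iff le_floor_iff floor_le_iff)
  ultimately show ?thesis
    by (simp add: sum.delta)
qed

lemma fejer_kernel_integral_tendsto:
  fixes g :: "real \<Rightarrow> complex"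
  assumes cont: "continuous_on UNIV g" and supp: "\<And>\<xi>. real N < \<bar>\<xi>\<bar> \<Longrightarrow> g \<xi> = 0"
  shows "(\<lambda>M. \<integral>\<xi>. fejer_kernel M \<xi> * g \<xi> \<partial>lborel) \<longlonglongrightarrow> (\<Sum>k\<in>{-int N..int N}. g (of_int k))"
proof -
  have [measurable]: "g \<in> borel_measurable borel"
    by (rule borel_measurable_continuous_onI[OF cont])
  have half_open: "(\<integral>\<xi>. indicator {real_of_int k - 1/2..real_of_int k + 1/2} \<xi> * (fejer_kernel M \<xi> * g \<xi>) \<partial>lborel)
      = (\<integral>\<xi>. indicator {real_of_int k - 1/2..<real_of_int k + 1/2} \<xi> * (fejer_kernel M \<xi> * g \<xi>) \<partial>lborel)"
    and integrable: "integrable lborel (\<lambda>\<xi>. indicator {real_of_int k - 1/2..<real_of_int k + 1/2} \<xi> * (fejer_kernel M \<xi> * g \<xi>))"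
    for k :: int and M
  proof -
    have ae: "AE \<xi> in lborel. indicator {real_of_int k - 1/2..real_of_int k + 1/2} \<xi> * (fejer_kernel M \<xi> * g \<xi>)
        = indicator {real_of_int k - 1/2..<real_of_int k + 1/2} \<xi> * (fejer_kernel M \<xi> * g \<xi>)"
      using AE_lborel_singleton[of "real_of_int k + 1/2"] by eventually_elim (auto simp: indicator_def)
    show "integrable lborel (\<lambda>\<xi>. indicator {real_of_int k - 1/2..<real_of_int k + 1/2} \<xi> * (fejer_kernel M \<xi> * g \<xi>))"
    proof (rule integrable_cong_AE_imp[OF _ _ ae])
      show "integrable lborel (\<lambda>\<xi>. indicator {real_of_int k - 1/2..real_of_int k + 1/2} \<xi> * (fejer_kernel M \<xi> * g \<xi>))"
        by (intro integrable_indicator_Icc_mult continuous_intros continuous_on_subset[OF cont]) simp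
    qed measurable
    show "(\<integral>\<xi>. indicator {real_of_int k - 1/2..real_of_int k + 1/2} \<xi> * (fejer_kernel M \<xi> * g \<xi>) \<partial>lborel)
        = (\<integral>\<xi>. indicator {real_of_int k - 1/2..<real_of_int k + 1/2} \<xi> * (fejer_kernel M \<xi> * g \<xi>) \<partial>lborel)"
      by (rule integral_cong_AE[OF _ _ ae]) measurable
  qed
  have "(\<integral>\<xi>. fejer_kernel M \<xi> * g \<xi> \<partial>lborel)
      = (\<Sum>k\<in>{-int N..int N}. \<integral>\<xi>. indicator {real_of_int k - 1/2..real_of_int k + 1/2} \<xi> * (fejer_kernel M \<xi> * g \<xi>) \<partial>lborel)"
    for M
  proof -
    have "fejer_kernel M \<xi> * g \<xi>
        = (\<Sum>k\<in>{-int N..int N}. indicator {real_of_int k - 1/2..<real_of_int k + 1/2} \<xi> * (fejer_kernel M \<xi> * g \<xi>))"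
      for \<xi>
      using supp[of \<xi>] sum_indicator_unit_intervals[of \<xi> N, where 'a=complex]
      by (cases "\<bar>\<xi>\<bar> \<le> real N") (simp_all add: sum_distrib_right[symmetric])
    then have "(\<integral>\<xi>. fejer_kernel M \<xi> * g \<xi> \<partial>lborel)
        = (\<integral>\<xi>. (\<Sum>k\<in>{-int N..int N}. indicator {real_of_int k - 1/2..<real_of_int k + 1/2} \<xi> * (fejer_kernel M \<xi> * g \<xi>)) \<partial>lborel)"
      by (intro Bochner_Integration.integral_cong) simp_all
    also have "\<dots> = (\<Sum>k\<in>{-int N..int N}. \<integral>\<xi>. indicator {real_of_int k - 1/2..<real_of_int k + 1/2} \<xi> * (fejer_kernel M \<xi> * g \<xi>) \<partial>lborel)"
      by (intro Bochner_Integration.integral_sum integrable)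
    finally show ?thesis
      by (simp only: half_open)
  qed
  then show ?thesis
    by (simp only:) (intro tendsto_sum fejer_kernel_localized_tendsto cont)
qed

section \<open>Fourier integrals of compactly supported functions on the line\<close>

definition fourier_integral :: "(real \<Rightarrow> real) \<Rightarrow> real \<Rightarrow> complex" where
  "fourier_integral \<phi> y = (\<integral>\<xi>. complex_of_real (\<phi> \<xi>) * cis (y * \<xi>) \<partial>lborel)"

lemma borel_measurable_cis [measurable]: "cis \<in> borel_measurable borel"
  by (intro borel_measurable_continuous_onI continuous_intros)

lemma borel_measurable_fourier_integral [measurable]:
  assumes [measurable]: "\<phi> \<in> borel_measurable borel"
  shows "fourier_integral \<phi> \<in> borel_measurable borel"
  unfolding fourier_integral_def by measurable

lemma integrable_continuous_vanishing_outside: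
  fixes g :: "real \<Rightarrow> 'a::{banach, second_countable_topology}"
  assumes "continuous_on UNIV g" "\<And>\<xi>. R < \<bar>\<xi>\<bar> \<Longrightarrow> g \<xi> = 0"
  shows "integrable lborel g"
proof -
  have "set_integrable lborel {-R..R} g"
    using assms(1) by (intro borel_integrable_atLeastAtMost') (rule continuous_on_subset, auto)
  moreover have "(\<lambda>x. indicator {-R..R} x *\<^sub>R g x) = g"
    using assms(2) by (auto simp: fun_eq_iff indicator_def abs_le_iff)
  ultimately show ?thesis
    unfolding set_integrable_def by simp
qed

text \<open>The translates of \<open>[0, 2\<pi>)\<close> by multiples of \<open>2\<pi>\<close> are disjoint.\<close>

lemma nn_integral_period_sum_translates_le:
  fixes F :: "real \<Rightarrow> ennreal" and J :: "int set"
  assumes [measurable]: "F \<in> borel_measurable borel" and "finite J"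
  shows "(\<integral>\<^sup>+t. indicator {0..<2*pi} t * (\<Sum>j\<in>J. F (t + a + 2*pi * of_int j)) \<partial>lborel)
    \<le> (\<integral>\<^sup>+s. F s \<partial>lborel)"
proof -
  have "(\<integral>\<^sup>+t. indicator {0..<2*pi} t * F (t + a + 2*pi * of_int j) \<partial>lborel)
      = (\<integral>\<^sup>+s. indicator {0..<2*pi} (s - a - 2*pi * of_int j) * F s \<partial>lborel)" for j
    using nn_integral_real_affine[where c=1 and t="a + 2*pi * of_int j"
        and f="\<lambda>s. indicator {0..<2*pi} (s - a - 2*pi * of_int j) * F s"]
    by (simp add: algebra_simps)
  then have "(\<integral>\<^sup>+t. indicator {0..<2*pi} t * (\<Sum>j\<in>J. F (t + a + 2*pi * of_int j)) \<partial>lborel)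
      = (\<integral>\<^sup>+s. (\<Sum>j\<in>J. indicator {0..<2*pi} (s - a - 2*pi * of_int j)) * F s \<partial>lborel)"
    by (simp add: sum_distrib_left sum_distrib_right nn_integral_sum)
  also have "\<dots> \<le> (\<integral>\<^sup>+s. F s \<partial>lborel)"
  proof (rule nn_integral_mono)
    fix s :: real
    define j0 where "j0 = \<lfloor>(s - a) / (2*pi)\<rfloor>"
    have "s - a - 2*pi * of_int j \<in> {0..<2*pi} \<longleftrightarrow> j0 = j" for j
    proof -
      have "s - a - 2*pi * of_int j \<in> {0..<2*pi}
          \<longleftrightarrow> of_int j \<le> (s - a) / (2*pi) \<and> (s - a) / (2*pi) < of_int j + 1"
        by (auto simp: field_simps)
      then show ?thesis
        unfolding j0_def floor_eq_iff .
    qed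
    then have "(\<Sum>j\<in>J. indicator {0..<2*pi} (s - a - 2*pi * of_int j)) = (\<Sum>j\<in>J. if j = j0 then 1 else (0::ennreal))"
      by (intro sum.cong) (auto simp: indicator_def)
    also have "\<dots> \<le> 1"
      using \<open>finite J\<close> by (simp add: sum.delta)
    finally show "(\<Sum>j\<in>J. indicator {0..<2*pi} (s - a - 2*pi * of_int j)) * F s \<le> F s"
      using mult_right_mono[of _ 1 "F s"] by simp
  qed
  finally show ?thesis .
qed

text \<open>Fejer means of the periodization \<open>\<Sum>\<^sub>j fourier_integral \<phi> (x + 2\<pi> j)\<close>; by Poisson
  summation they approximate the trigonometric polynomial \<open>\<Sum>\<^sub>k \<phi> k * cis (k x)\<close>.\<close>

definition fejer_periodization :: "(real \<Rightarrow> real) \<Rightarrow> nat \<Rightarrow> real \<Rightarrow> complex" where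
  "fejer_periodization \<phi> M x =
    (\<Sum>n\<le>M. \<Sum>j\<in>{-int n..int n}. fourier_integral \<phi> (x + 2*pi * of_int j)) / (of_nat M + 1)"

lemma borel_measurable_fejer_periodization [measurable]:
  assumes [measurable]: "\<phi> \<in> borel_measurable borel"
  shows "fejer_periodization \<phi> M \<in> borel_measurable borel"
  unfolding fejer_periodization_def by measurable

lemma fejer_periodization_eq_integral:
  assumes cont: "continuous_on UNIV \<phi>" and supp: "\<And>\<xi>. R < \<bar>\<xi>\<bar> \<Longrightarrow> \<phi> \<xi> = 0"
  shows "fejer_periodization \<phi> M x
    = (\<integral>\<xi>. fejer_kernel M \<xi> * (complex_of_real (\<phi> \<xi>) * cis (x * \<xi>)) \<partial>lborel)"
proof -
  have integrable: "integrable lborel (\<lambda>\<xi>. complex_of_real (\<phi> \<xi>) * cis (a * \<xi>))" for a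
    by (rule integrable_continuous_vanishing_outside[where R=R])
       (auto intro!: continuous_intros cont simp: supp)
  have "complex_of_real (fejer_kernel M \<xi>) * (complex_of_real (\<phi> \<xi>) * cis (x * \<xi>))
      = (\<Sum>n\<le>M. \<Sum>j\<in>{-int n..int n}. complex_of_real (\<phi> \<xi>) * cis ((x + 2*pi * of_int j) * \<xi>))
        / (of_nat M + 1)" for \<xi>
  proof -
    have "complex_of_real (fejer_kernel M \<xi>)
        = (\<Sum>n\<le>M. \<Sum>j\<in>{-int n..int n}. cis (2 * pi * of_int j * \<xi>)) / (of_nat M + 1)"
      by (simp add: fejer_kernel_def dirichlet_kernel_cis_sum[symmetric])
    then show ?thesis
      by (simp add: sum_distrib_left sum_distrib_right sum_divide_distrib cis_mult algebra_simps)
  qed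
  then have "(\<integral>\<xi>. fejer_kernel M \<xi> * (complex_of_real (\<phi> \<xi>) * cis (x * \<xi>)) \<partial>lborel)
      = (\<Sum>n\<le>M. \<Sum>j\<in>{-int n..int n}. \<integral>\<xi>. complex_of_real (\<phi> \<xi>) * cis ((x + 2*pi * of_int j) * \<xi>) \<partial>lborel)
        / (of_nat M + 1)"
    by (simp add: integral_divide_zero Bochner_Integration.integral_sum integrable)
  then show ?thesis
    by (simp add: fejer_periodization_def fourier_integral_def)
qed

lemma norm_fejer_periodization_le:
  "ennreal (norm (fejer_periodization \<phi> M x))
    \<le> ennreal (1 / (real M + 1)) *
      (\<Sum>n\<le>M. \<Sum>j\<in>{-int n..int n}. ennreal (norm (fourier_integral \<phi> (x + 2*pi * of_int j))))"
proof -
  have "norm (of_nat M + 1 :: complex) = real M + 1"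
    using norm_of_nat[of "Suc M", where 'a=complex] by (simp add: add.commute)
  then have "norm (fejer_periodization \<phi> M x)
      \<le> (\<Sum>n\<le>M. \<Sum>j\<in>{-int n..int n}. norm (fourier_integral \<phi> (x + 2*pi * of_int j))) / (real M + 1)"
    unfolding fejer_periodization_def norm_divide
    by (simp only:) (intro divide_right_mono order.trans[OF norm_sum sum_mono] norm_sum, auto)
  then have "ennreal (norm (fejer_periodization \<phi> M x))
      \<le> ennreal (1 / (real M + 1) * (\<Sum>n\<le>M. \<Sum>j\<in>{-int n..int n}. norm (fourier_integral \<phi> (x + 2*pi * of_int j))))"
    by (intro ennreal_leI) simp
  also have "\<dots> = ennreal (1 / (real M + 1)) *
      (\<Sum>n\<le>M. \<Sum>j\<in>{-int n..int n}. ennreal (norm (fourier_integral \<phi> (x + 2*pi * of_int j))))"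
    by (subst ennreal_mult) (simp_all add: sum_nonneg sum_ennreal)
  finally show ?thesis .
qed

lemma nn_integral_fejer_periodization_le:
  assumes [measurable]: "\<phi> \<in> borel_measurable borel"
  shows "(\<integral>\<^sup>+t. indicator {0..<2*pi} t * ennreal (norm (fejer_periodization \<phi> M (t - y))) \<partial>lborel)
    \<le> (\<integral>\<^sup>+x. ennreal (norm (fourier_integral \<phi> x)) \<partial>lborel)"
proof -
  define I where "I = (\<integral>\<^sup>+x. ennreal (norm (fourier_integral \<phi> x)) \<partial>lborel)"
  define S where "S n t = (\<Sum>j\<in>{-int n..int n}. ennreal (norm (fourier_integral \<phi> (t - y + 2*pi * of_int j))))"
    for n t
  have [measurable]: "(\<lambda>t. S n t) \<in> borel_measurable borel" for n
    unfolding S_def by measurable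
  have S_le: "(\<integral>\<^sup>+t. indicator {0..<2*pi} t * S n t \<partial>lborel) \<le> I" for n
    using nn_integral_period_sum_translates_le[where a="-y" and J="{-int n..int n}"
        and F="\<lambda>x. ennreal (norm (fourier_integral \<phi> x))"]
    unfolding S_def I_def by simp
  have "ennreal (norm (fejer_periodization \<phi> M (t - y))) \<le> ennreal (1 / (real M + 1)) * (\<Sum>n\<le>M. S n t)" for t
    unfolding S_def by (rule norm_fejer_periodization_le)
  then have "(\<integral>\<^sup>+t. indicator {0..<2*pi} t * ennreal (norm (fejer_periodization \<phi> M (t - y))) \<partial>lborel)
      \<le> (\<integral>\<^sup>+t. ennreal (1 / (real M + 1)) * (\<Sum>n\<le>M. indicator {0..<2*pi} t * S n t) \<partial>lborel)"
    by (intro nn_integral_mono) (auto simp: indicator_def)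
  also have "\<dots> = ennreal (1 / (real M + 1)) * (\<Sum>n\<le>M. \<integral>\<^sup>+t. indicator {0..<2*pi} t * S n t \<partial>lborel)"
  proof -
    have "(\<integral>\<^sup>+t. (\<Sum>n\<le>M. indicator {0..<2*pi} t * S n t) \<partial>lborel)
        = (\<Sum>n\<le>M. \<integral>\<^sup>+t. indicator {0..<2*pi} t * S n t \<partial>lborel)"
      by (rule nn_integral_sum) measurable
    then show ?thesis
      by (subst nn_integral_cmult) simp_all
  qed
  also have "\<dots> \<le> ennreal (1 / (real M + 1)) * (\<Sum>n\<le>M. I)"
    by (intro mult_left_mono sum_mono S_le) auto
  also have "\<dots> = I"
  proof -
    have "ennreal (1 / (real M + 1)) * of_nat (Suc M) = 1"
      by (simp add: ennreal_of_nat_eq_real_of_nat ennreal_mult''[symmetric] del: of_nat_Suc)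
    then show ?thesis
      by (simp add: mult.assoc[symmetric] del: of_nat_Suc)
  qed
  finally show ?thesis
    unfolding I_def .
qed

text \<open>Fatou's lemma along the Fejer means of the periodization.\<close>

lemma nn_integral_trig_poly_le_fourier_integral:
  assumes cont: "continuous_on UNIV \<phi>" and supp: "\<And>\<xi>. real N < \<bar>\<xi>\<bar> \<Longrightarrow> \<phi> \<xi> = 0"
  shows "(\<integral>\<^sup>+t. indicator {0..<2*pi} t *
            ennreal (norm (\<Sum>k\<in>{-int N..int N}. complex_of_real (\<phi> (of_int k)) * cis (of_int k * (t - y)))) \<partial>lborel)
    \<le> (\<integral>\<^sup>+x. ennreal (norm (fourier_integral \<phi> x)) \<partial>lborel)"
proof -
  have [measurable]: "\<phi> \<in> borel_measurable borel"
    by (rule borel_measurable_continuous_onI[OF cont])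
  define K where "K x = (\<Sum>k\<in>{-int N..int N}. complex_of_real (\<phi> (of_int k)) * cis (of_int k * x))" for x
  have K_limit: "(\<lambda>M. fejer_periodization \<phi> M x) \<longlonglongrightarrow> K x" for x
  proof -
    have "(\<lambda>M. \<integral>\<xi>. fejer_kernel M \<xi> * (complex_of_real (\<phi> \<xi>) * cis (x * \<xi>)) \<partial>lborel)
        \<longlonglongrightarrow> (\<Sum>k\<in>{-int N..int N}. complex_of_real (\<phi> (of_int k)) * cis (x * of_int k))"
      by (rule fejer_kernel_integral_tendsto) (auto intro!: continuous_intros cont simp: supp)
    then show ?thesis
      by (simp add: fejer_periodization_eq_integral[OF cont supp] K_def mult.commute)
  qed
  have "(\<integral>\<^sup>+t. indicator {0..<2*pi} t * ennreal (norm (K (t - y))) \<partial>lborel)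
      = (\<integral>\<^sup>+t. liminf (\<lambda>M. indicator {0..<2*pi} t * ennreal (norm (fejer_periodization \<phi> M (t - y)))) \<partial>lborel)"
  proof (rule nn_integral_cong)
    fix t
    have "(\<lambda>M. indicator {0..<2*pi} t * ennreal (norm (fejer_periodization \<phi> M (t - y))))
        \<longlonglongrightarrow> indicator {0..<2*pi} t * ennreal (norm (K (t - y)))"
      by (cases "t \<in> {0..<2*pi}") (auto intro!: tendsto_intros K_limit)
    then show "indicator {0..<2*pi} t * ennreal (norm (K (t - y)))
        = liminf (\<lambda>M. indicator {0..<2*pi} t * ennreal (norm (fejer_periodization \<phi> M (t - y))))"
      by (simp add: lim_imp_Liminf)
  qed
  also have "\<dots> \<le> liminf (\<lambda>M. \<integral>\<^sup>+t. indicator {0..<2*pi} t * ennreal (norm (fejer_periodization \<phi> M (t - y))) \<partial>lborel)"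
    by (rule nn_integral_liminf) measurable
  also have "\<dots> \<le> (\<integral>\<^sup>+x. ennreal (norm (fourier_integral \<phi> x)) \<partial>lborel)"
    by (rule Liminf_le) (auto intro!: always_eventually nn_integral_fejer_periodization_le)
  finally show ?thesis
    unfolding K_def .
qed

lemma has_vector_derivative_cis_mult:
  "((\<lambda>\<xi>. cis (y * \<xi>)) has_vector_derivative (\<i> * complex_of_real y * cis (y * \<xi>))) (at \<xi> within S)"
proof -
  have "((\<lambda>z. exp (\<i> * complex_of_real y * z)) has_field_derivative
      (\<i> * complex_of_real y * exp (\<i> * complex_of_real y * complex_of_real \<xi>))) (at (complex_of_real \<xi>))"
    by (auto intro!: derivative_eq_intros)
  from has_vector_derivative_real_field[OF this, of S] show ?thesis
    by (simp add: cis_conv_exp mult.assoc)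
qed

lemma derivative_vanishes_outside:
  fixes \<phi> \<phi>' :: "real \<Rightarrow> real"
  assumes "\<And>x. (\<phi> has_real_derivative \<phi>' x) (at x)" and "\<And>\<xi>. R < \<bar>\<xi>\<bar> \<Longrightarrow> \<phi> \<xi> = 0"
    and "R < \<bar>x\<bar>"
  shows "\<phi>' x = 0"
proof -
  have "open {\<xi>::real. R < \<bar>\<xi>\<bar>}"
    by (rule open_Collect_less) (auto intro!: continuous_intros)
  then have "((\<lambda>_. 0) has_real_derivative \<phi>' x) (at x)"
    by (rule has_field_derivative_transform_within_open[OF assms(1)]) (use assms in auto)
  then show ?thesis
    using DERIV_unique DERIV_const by blast
qed

lemma fourier_integral_deriv:
  fixes \<phi> \<phi>' :: "real \<Rightarrow> real"
  assumes d: "\<And>x. (\<phi> has_real_derivative \<phi>' x) (at x)" and c': "continuous_on UNIV \<phi>'"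
    and s: "\<And>\<xi>. R < \<bar>\<xi>\<bar> \<Longrightarrow> \<phi> \<xi> = 0"
  shows "fourier_integral \<phi>' y = - (\<i> * complex_of_real y * fourier_integral \<phi> y)"
proof -
  have c: "continuous_on UNIV \<phi>"
    using d by (meson DERIV_isCont continuous_at_imp_continuous_on)
  have s': "\<phi>' \<xi> = 0" if "R < \<bar>\<xi>\<bar>" for \<xi>
    using derivative_vanishes_outside[OF d s that] .
  define a where "a = \<bar>R\<bar> + 1"
  define f where "f \<xi> = complex_of_real (\<phi>' \<xi>) * cis (y * \<xi>) + \<i> * complex_of_real y * (complex_of_real (\<phi> \<xi>) * cis (y * \<xi>))"
    for \<xi>
  define F where "F \<xi> = complex_of_real (\<phi> \<xi>) * cis (y * \<xi>)" for \<xi>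
  have "(\<integral>\<xi>. indicator {-a..a} \<xi> *\<^sub>R f \<xi> \<partial>lborel) = F a - F (-a)"
  proof (rule integral_FTC_atLeastAtMost)
    fix x
    have "(F has_vector_derivative (complex_of_real (\<phi> x) * (\<i> * complex_of_real y * cis (y * x))
        + complex_of_real (\<phi>' x) * cis (y * x))) (at x within {-a..a})"
      unfolding F_def
      by (intro has_vector_derivative_mult has_vector_derivative_cis_mult has_vector_derivative_of_real
          DERIV_subset[OF d]) auto
    then show "(F has_vector_derivative f x) (at x within {-a..a})"
      by (simp add: f_def algebra_simps)
  qed (auto simp: a_def f_def intro!: continuous_intros continuous_on_subset[OF c] continuous_on_subset[OF c'])
  moreover have "F a = 0" "F (-a) = 0"
    using s by (auto simp: F_def a_def)
  moreover have "(\<lambda>\<xi>. indicator {-a..a} \<xi> *\<^sub>R f \<xi>) = f"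
    using s s' by (auto simp: fun_eq_iff indicator_def f_def a_def)
  ultimately have "(\<integral>\<xi>. f \<xi> \<partial>lborel) = 0"
    by simp
  moreover have "integrable lborel (\<lambda>\<xi>. complex_of_real (\<phi>' \<xi>) * cis (y * \<xi>))"
    by (rule integrable_continuous_vanishing_outside[where R=R]) (auto intro!: continuous_intros c' simp: s')
  moreover have "integrable lborel (\<lambda>\<xi>. complex_of_real (\<phi> \<xi>) * cis (y * \<xi>))"
    by (rule integrable_continuous_vanishing_outside[where R=R]) (auto intro!: continuous_intros c simp: s)
  ultimately have "fourier_integral \<phi>' y + \<i> * complex_of_real y * fourier_integral \<phi> y = 0"
    unfolding f_def fourier_integral_def by simp
  then show ?thesis
    by (simp add: eq_neg_iff_add_eq_0)
qed

lemma norm_fourier_integral_le: "norm (fourier_integral \<phi> y) \<le> (\<integral>\<xi>. \<bar>\<phi> \<xi>\<bar> \<partial>lborel)"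
proof -
  have "norm (fourier_integral \<phi> y) \<le> (\<integral>\<xi>. norm (complex_of_real (\<phi> \<xi>) * cis (y * \<xi>)) \<partial>lborel)"
    unfolding fourier_integral_def by (rule integral_norm_bound)
  then show ?thesis
    by (simp add: norm_mult)
qed

text \<open>Two integrations by parts give \<open>y\<^sup>2 fourier_integral \<phi> y = - fourier_integral \<phi>'' y\<close>, hence
  decay like \<open>1 / (1 + y\<^sup>2)\<close>.\<close>

lemma integrable_norm_fourier_integral:
  fixes \<phi> \<phi>' \<phi>'' :: "real \<Rightarrow> real"
  assumes d: "\<And>x. (\<phi> has_real_derivative \<phi>' x) (at x)"
    and d': "\<And>x. (\<phi>' has_real_derivative \<phi>'' x) (at x)"
    and c'': "continuous_on UNIV \<phi>''"
    and s: "\<And>\<xi>. R < \<bar>\<xi>\<bar> \<Longrightarrow> \<phi> \<xi> = 0"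
  shows "integrable lborel (\<lambda>y. norm (fourier_integral \<phi> y))"
proof -
  have c: "continuous_on UNIV \<phi>"
    using d by (meson DERIV_isCont continuous_at_imp_continuous_on)
  have c': "continuous_on UNIV \<phi>'"
    using d' by (meson DERIV_isCont continuous_at_imp_continuous_on)
  have s': "\<phi>' \<xi> = 0" if "R < \<bar>\<xi>\<bar>" for \<xi>
    using derivative_vanishes_outside[OF d s that] .
  have [measurable]: "\<phi> \<in> borel_measurable borel"
    by (rule borel_measurable_continuous_onI[OF c])
  define C where "C = (\<integral>\<xi>. \<bar>\<phi> \<xi>\<bar> \<partial>lborel) + (\<integral>\<xi>. \<bar>\<phi>'' \<xi>\<bar> \<partial>lborel)"
  have "(1 + y\<^sup>2) * norm (fourier_integral \<phi> y) \<le> C" for y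
  proof -
    have "fourier_integral \<phi>'' y = - (\<i> * complex_of_real y * fourier_integral \<phi>' y)"
      by (rule fourier_integral_deriv[OF d' c'' s'])
    also have "fourier_integral \<phi>' y = - (\<i> * complex_of_real y * fourier_integral \<phi> y)"
      by (rule fourier_integral_deriv[OF d c' s])
    finally have "complex_of_real (y\<^sup>2) * fourier_integral \<phi> y = - fourier_integral \<phi>'' y"
      by (simp add: power2_eq_square algebra_simps)
    then have "y\<^sup>2 * norm (fourier_integral \<phi> y) = norm (fourier_integral \<phi>'' y)"
      by (metis norm_minus_cancel norm_mult norm_of_real abs_power2)
    then show ?thesis
      using norm_fourier_integral_le[of \<phi> y] norm_fourier_integral_le[of \<phi>'' y]
      by (simp add: C_def algebra_simps)
  qed
  then have bound: "norm (fourier_integral \<phi> y) \<le> C * inverse (1 + y\<^sup>2)" for y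
    by (simp add: field_simps add_pos_nonneg)
  have "integrable lborel (\<lambda>y. C * inverse (1 + y\<^sup>2))"
    using integrable_inverse_1_plus_square unfolding set_integrable_def by simp
  then show ?thesis
  proof (rule Bochner_Integration.integrable_bound)
    show "AE y in lborel. norm (norm (fourier_integral \<phi> y)) \<le> norm (C * inverse (1 + y\<^sup>2))"
      using bound by (intro AE_I2) (simp add: order.trans[OF _ abs_ge_self])
  qed measurable
qed

section \<open>The dyadic partition of unity generated by an admissible cutoff\<close>

lemma c_psi_ge:
  assumes "j \<in> {0, 1}"
  shows "1 / (2 * pi) * (\<integral>x. norm (fourier_integral (phi \<psi> j) x) \<partial>lborel) \<le> c_psi \<psi>"
  unfolding c_psi_def fourier_integral_def using assms by (intro Max_ge) auto

lemma c_psi_nonneg: "0 \<le> c_psi \<psi>"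
proof -
  have "0 \<le> 1 / (2 * pi) * (\<integral>x. norm (fourier_integral (phi \<psi> 0) x) \<partial>lborel)"
    by (intro mult_nonneg_nonneg integral_nonneg_AE) auto
  then show ?thesis
    using c_psi_ge[of 0 \<psi>] by (rule order.trans) simp
qed

locale admissible_cutoff =
  fixes \<psi> :: "real \<Rightarrow> real"
  assumes admissible: "admissible \<psi>"
begin

lemma psi_vanishes: "3/2 < \<bar>\<xi>\<bar> \<Longrightarrow> \<psi> \<xi> = 0"
  and psi_eq_1: "\<bar>\<xi>\<bar> \<le> 1 \<Longrightarrow> \<psi> \<xi> = 1"
  using admissible unfolding admissible_def by auto

lemma psi_derivatives:
  obtains D where "D 0 = \<psi>" "\<And>n x. (D n has_real_derivative D (Suc n) x) (at x)"
proof -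
  have "smooth \<psi>"
    using admissible unfolding admissible_def by blast
  then obtain D where "D 0 = \<psi>" "\<forall>n x. (D n has_real_derivative D (Suc n) x) (at x)"
    unfolding smooth_def by blast
  then show ?thesis
    using that by blast
qed

lemma continuous_on_phi: "continuous_on UNIV (phi \<psi> j)"
proof -
  obtain D where "D 0 = \<psi>" "\<And>n x. (D n has_real_derivative D (Suc n) x) (at x)"
    using psi_derivatives by blast
  then have "continuous_on UNIV \<psi>"
    by (meson DERIV_isCont continuous_at_imp_continuous_on)
  then have comp: "continuous_on UNIV (\<lambda>\<xi>. \<psi> (f \<xi>))" if "continuous_on UNIV f" for f
    using continuous_on_compose2[OF _ that] by auto
  show ?thesis
    unfolding phi_def by (cases "j = 0") (auto intro!: continuous_intros comp)
qed

lemma borel_measurable_phi [measurable]: "phi \<psi> j \<in> borel_measurable borel"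
  by (rule borel_measurable_continuous_onI[OF continuous_on_phi])

lemma abs_le_of_phi_nonzero:
  assumes "phi \<psi> l \<xi> \<noteq> 0"
  shows "\<bar>\<xi>\<bar> \<le> 3/2 * 2^l"
proof (rule ccontr)
  assume "\<not> \<bar>\<xi>\<bar> \<le> 3/2 * 2^l"
  moreover have "(2::real)^(l-1) \<le> 2^l"
    by (rule power_increasing) auto
  ultimately have "3/2 * 2^l < \<bar>\<xi>\<bar>" and "3/2 * 2^(l-1) < \<bar>\<xi>\<bar>"
    by linarith+
  then have "\<psi> (\<xi> / 2^l) = 0" "\<psi> (\<xi> / 2^(l-1)) = 0"
    by (auto intro!: psi_vanishes simp: abs_divide field_simps)
  then show False
    using assms by (cases "l = 0") (simp_all add: phi_def)
qed

lemma phi_vanishes: "real (2 ^ (j+1)) < \<bar>\<xi>\<bar> \<Longrightarrow> phi \<psi> j \<xi> = 0"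
  using abs_le_of_phi_nonzero[of j \<xi>] by fastforce

lemma phi_vanishes_small:
  assumes "1 \<le> l" "\<bar>\<xi>\<bar> \<le> 2^(l-1)"
  shows "phi \<psi> l \<xi> = 0"
proof -
  have "(2::real)^(l-1) \<le> 2^l"
    by (rule power_increasing) auto
  then have "\<bar>\<xi>\<bar> \<le> 2^l"
    using assms(2) by linarith
  then have "\<bar>\<xi> / 2^(l-1)\<bar> \<le> 1" "\<bar>\<xi> / 2^l\<bar> \<le> 1"
    using assms by (simp_all add: abs_divide)
  then show ?thesis
    using assms psi_eq_1 by (simp add: phi_def)
qed

lemma phi_rescale: "1 \<le> j \<Longrightarrow> phi \<psi> j \<xi> = phi \<psi> 1 (\<xi> / 2^(j-1))"
  by (cases j) (simp_all add: phi_def mult.commute)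

lemma sum_phi_telescope: "(\<Sum>l\<le>J. phi \<psi> l \<xi>) = \<psi> (\<xi> / 2^J)"
  by (induction J) (simp_all add: phi_def)

lemma integrable_norm_fourier_phi:
  assumes "j \<in> {0, 1}"
  shows "integrable lborel (\<lambda>y. norm (fourier_integral (phi \<psi> j) y))"
proof -
  obtain D where D0: "D 0 = \<psi>" and D: "\<And>n x. (D n has_real_derivative D (Suc n) x) (at x)"
    using psi_derivatives by blast
  have cont: "continuous_on UNIV (D n)" for n
    using D by (meson DERIV_isCont continuous_at_imp_continuous_on)
  show ?thesis
  proof (cases "j = 0")
    case True
    then have "phi \<psi> j = D 0"
      using D0 by (simp add: fun_eq_iff phi_def)
    moreover have "integrable lborel (\<lambda>y. norm (fourier_integral (D 0) y))"
      by (rule integrable_norm_fourier_integral[where R="3/2", OF D D cont]) (use psi_vanishes D0 in auto)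
    ultimately show ?thesis
      by simp
  next
    case False
    then have phi1: "phi \<psi> j = (\<lambda>\<xi>. D 0 (\<xi>/2) - D 0 \<xi>)"
      using assms D0 by (auto simp: fun_eq_iff phi_def)
    have half: "((\<lambda>\<xi>. D n (\<xi>/2)) has_real_derivative D (Suc n) (x/2) / 2) (at x)" for n x
    proof -
      have "((\<lambda>z. z/2) has_real_derivative 1/2) (at x)"
        by (auto intro!: derivative_eq_intros)
      from DERIV_chain2[OF D this] show ?thesis
        by simp
    qed
    have d1: "((\<lambda>\<xi>. D 0 (\<xi>/2) - D 0 \<xi>) has_real_derivative D 1 (x/2) / 2 - D 1 x) (at x)" for x
      using half[of 0 x] D[of 0 x] by (auto intro!: derivative_eq_intros)
    have d2: "((\<lambda>\<xi>. D 1 (\<xi>/2) / 2 - D 1 \<xi>) has_real_derivative D 2 (x/2) / 4 - D 2 x) (at x)" for x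
      using half[of 1 x] D[of 1 x] by (auto intro!: derivative_eq_intros simp: numeral_2_eq_2)
    have c2: "continuous_on UNIV (\<lambda>\<xi>. D 2 (\<xi>/2) / 4 - D 2 \<xi>)"
      using cont[of 2] by (auto intro!: continuous_intros continuous_on_compose2[of UNIV "D 2"])
    have vanishes: "D 0 (\<xi>/2) - D 0 \<xi> = 0" if "3 < \<bar>\<xi>\<bar>" for \<xi>
      using psi_vanishes[of "\<xi>/2"] psi_vanishes[of \<xi>] that D0 by (auto simp: abs_divide)
    show ?thesis
      unfolding phi1 by (rule integrable_norm_fourier_integral[OF d1 d2 c2 vanishes])
  qed
qed

lemma fourier_integral_phi_rescale:
  assumes "1 \<le> j"
  shows "fourier_integral (phi \<psi> j) y = 2^(j-1) * fourier_integral (phi \<psi> 1) (2^(j-1) * y)"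
proof -
  define a :: real where "a = 2^(j-1)"
  have a: "a > 0"
    unfolding a_def by simp
  have "fourier_integral (phi \<psi> j) y = (\<integral>\<xi>. complex_of_real (phi \<psi> 1 (\<xi> / a)) * cis (y * \<xi>) \<partial>lborel)"
    unfolding fourier_integral_def a_def using phi_rescale[OF assms] by simp
  also have "\<dots> = \<bar>a\<bar> *\<^sub>R (\<integral>\<eta>. complex_of_real (phi \<psi> 1 ((0 + a * \<eta>) / a)) * cis (y * (0 + a * \<eta>)) \<partial>lborel)"
    by (rule lborel_integral_real_affine) (use a in simp)
  also have "\<dots> = complex_of_real a * fourier_integral (phi \<psi> 1) (a * y)"
    unfolding fourier_integral_def using a by (simp add: scaleR_conv_of_real mult_ac)
  finally show ?thesis
    unfolding a_def by simp
qed

text \<open>The \<open>L\<^sub>1\<close> norm of a Fourier integral is invariant under dilation, so the bound defining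
  \<open>c_psi\<close> for the first two levels holds at every level.\<close>

lemma nn_integral_fourier_phi_le:
  "(\<integral>\<^sup>+y. norm (fourier_integral (phi \<psi> j) y) \<partial>lborel) \<le> ennreal (2 * pi * c_psi \<psi>)"
proof -
  have le: "(\<integral>\<^sup>+y. norm (fourier_integral (phi \<psi> i) y) \<partial>lborel) \<le> ennreal (2 * pi * c_psi \<psi>)"
    if "i \<in> {0, 1}" for i
  proof -
    have "(\<integral>y. norm (fourier_integral (phi \<psi> i) y) \<partial>lborel) \<le> 2 * pi * c_psi \<psi>"
      using c_psi_ge[OF that, of \<psi>] by (simp add: field_simps)
    then show ?thesis
      by (subst nn_integral_eq_integral[OF integrable_norm_fourier_phi[OF that]]) (auto intro: ennreal_leI)
  qed
  show ?thesis
  proof (cases "j \<le> 1")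
    case True
    then show ?thesis
      using le[of j] by (cases j) auto
  next
    case False
    define a :: real where "a = 2^(j-1)"
    have a: "a > 0"
      unfolding a_def by simp
    have "(\<integral>\<^sup>+y. norm (fourier_integral (phi \<psi> j) y) \<partial>lborel)
        = (\<integral>\<^sup>+y. ennreal a * ennreal (norm (fourier_integral (phi \<psi> 1) (0 + a * y))) \<partial>lborel)"
    proof (intro nn_integral_cong)
      fix y
      have "norm (fourier_integral (phi \<psi> j) y) = a * norm (fourier_integral (phi \<psi> 1) (a * y))"
        using fourier_integral_phi_rescale[of j y] False by (simp add: a_def norm_mult norm_power)
      then show "ennreal (norm (fourier_integral (phi \<psi> j) y))
          = ennreal a * ennreal (norm (fourier_integral (phi \<psi> 1) (0 + a * y)))"
        using a by (simp add: ennreal_mult)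
    qed
    also have "\<dots> = ennreal a * (\<integral>\<^sup>+y. ennreal (norm (fourier_integral (phi \<psi> 1) (0 + a * y))) \<partial>lborel)"
      by (rule nn_integral_cmult) measurable
    also have "\<dots> = (\<integral>\<^sup>+y. ennreal (norm (fourier_integral (phi \<psi> 1) y)) \<partial>lborel)"
      using nn_integral_real_affine[OF _ , where c=a and t=0 and f="\<lambda>y. ennreal (norm (fourier_integral (phi \<psi> 1) y))"] a
      by simp
    also have "\<dots> \<le> ennreal (2 * pi * c_psi \<psi>)"
      by (rule le) simp
    finally show ?thesis .
  qed
qed

lemma nn_integral_phi_trig_poly_le:
  "(\<integral>\<^sup>+t. indicator {0..<2*pi} t *
      ennreal (norm (\<Sum>k\<in>{-int (2^(l+1))..int (2^(l+1))}.
        complex_of_real (phi \<psi> l (of_int k)) * cis (of_int k * (t - y)))) \<partial>lborel)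
   \<le> ennreal (2 * pi * c_psi \<psi>)"
  using nn_integral_trig_poly_le_fourier_integral[OF continuous_on_phi phi_vanishes]
    nn_integral_fourier_phi_le by (rule order.trans)

definition phi_levels :: "real \<Rightarrow> nat set" where
  "phi_levels \<xi> = {l. phi \<psi> l \<xi> \<noteq> 0}"

lemma phi_levels_bounded:
  obtains J where "phi_levels \<xi> \<subseteq> {..J}" "\<bar>\<xi>\<bar> \<le> 2^J"
proof -
  obtain J where J: "\<bar>\<xi>\<bar> < 2^J"
    using real_arch_pow[of 2 "\<bar>\<xi>\<bar>"] by auto
  have "l \<le> J" if "l \<in> phi_levels \<xi>" for l
  proof (rule ccontr)
    assume "\<not> l \<le> J"
    then have "(2::real)^J \<le> 2^(l-1)"
      by (intro power_increasing) auto
    then have "phi \<psi> l \<xi> = 0"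
      using J \<open>\<not> l \<le> J\<close> by (intro phi_vanishes_small) linarith+
    then show False
      using that by (simp add: phi_levels_def)
  qed
  then have "phi_levels \<xi> \<subseteq> {..J}"
    by auto
  with J show ?thesis
    by (intro that) auto
qed

lemma finite_phi_levels: "finite (phi_levels \<xi>)"
proof -
  obtain J where "phi_levels \<xi> \<subseteq> {..J}"
    by (rule phi_levels_bounded)
  then show ?thesis
    by (rule finite_subset) simp
qed

lemma sum_phi_levels: "(\<Sum>l\<in>phi_levels \<xi>. phi \<psi> l \<xi>) = 1"
proof -
  obtain J where J: "phi_levels \<xi> \<subseteq> {..J}" "\<bar>\<xi>\<bar> \<le> 2^J"
    by (rule phi_levels_bounded)
  have "(\<Sum>l\<in>phi_levels \<xi>. phi \<psi> l \<xi>) = (\<Sum>l\<le>J. phi \<psi> l \<xi>)"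
    by (rule sum.mono_neutral_left) (use J in \<open>auto simp: phi_levels_def\<close>)
  also have "\<dots> = 1"
    using J by (simp add: sum_phi_telescope psi_eq_1 abs_divide)
  finally show ?thesis .
qed

lemma card_phi_levels: "card (phi_levels \<xi>) \<le> 2"
proof (cases "phi_levels \<xi> = {}")
  case False
  define m where "m = Min (phi_levels \<xi>)"
  have m: "m \<in> phi_levels \<xi>" "\<And>l. l \<in> phi_levels \<xi> \<Longrightarrow> m \<le> l"
    using False finite_phi_levels by (simp_all add: m_def)
  have upper: "l \<le> Suc m" if l: "l \<in> phi_levels \<xi>" for l
  proof (rule ccontr)
    assume "\<not> l \<le> Suc m"
    then have "(2::real)^(Suc m) \<le> 2^(l-1)"
      by (intro power_increasing) auto
    moreover have "\<bar>\<xi>\<bar> \<le> 3/2 * 2^m"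
      using m(1) by (intro abs_le_of_phi_nonzero) (simp add: phi_levels_def)
    ultimately have "phi \<psi> l \<xi> = 0"
      using \<open>\<not> l \<le> Suc m\<close> by (intro phi_vanishes_small) auto
    then show False
      using l by (simp add: phi_levels_def)
  qed
  have "l = m \<or> l = Suc m" if "l \<in> phi_levels \<xi>" for l
    using m(2)[OF that] upper[OF that] by linarith
  then have "phi_levels \<xi> \<subseteq> {m, Suc m}"
    by blast
  then have "card (phi_levels \<xi>) \<le> card {m, Suc m}"
    by (rule card_mono[rotated]) simp
  then show ?thesis
    by simp
qed simp

end

section \<open>Integrals over the torus\<close>

lemma integral_lborel_prod:
  fixes f :: "'a::euclidean_space \<Rightarrow> real \<Rightarrow> complex"
  assumes int: "\<And>b. b \<in> Basis \<Longrightarrow> integrable lborel (f b)"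
  shows "(\<integral>x. (\<Prod>b\<in>Basis. f b (x \<bullet> b)) \<partial>(lborel::'a measure)) = (\<Prod>b\<in>Basis. \<integral>x. f b x \<partial>lborel)"
proof -
  interpret product_sigma_finite "\<lambda>_::'a. (lborel::real measure)"
    by standard
  have meas: "(\<lambda>x. \<Prod>b\<in>Basis. f b (x \<bullet> b)) \<in> borel_measurable (borel::'a measure)"
    using int by (intro borel_measurable_prod) (auto dest: borel_measurable_integrable
        intro: measurable_compose[OF borel_measurable_inner[OF measurable_ident_sets measurable_const]])
  have "(\<integral>x. (\<Prod>b\<in>Basis. f b (x \<bullet> b)) \<partial>(lborel::'a measure))
     = (\<integral>y. (\<Prod>b\<in>Basis. f b ((\<Sum>b'\<in>Basis. y b' *\<^sub>R b') \<bullet> b)) \<partial>(\<Pi>\<^sub>M b\<in>Basis. lborel))"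
    using meas by (subst lborel_eq) (simp add: integral_distr)
  also have "\<dots> = (\<integral>y. (\<Prod>b\<in>Basis. f b (y b)) \<partial>(\<Pi>\<^sub>M b\<in>Basis. lborel))"
    by (intro Bochner_Integration.integral_cong refl prod.cong)
       (simp_all add: inner_sum_left inner_Basis if_distrib sum.delta cong: if_cong)
  also have "\<dots> = (\<Prod>b\<in>Basis. \<integral>x. f b x \<partial>lborel)"
    by (rule product_integral_prod) (auto intro: int)
  finally show ?thesis .
qed

lemma prod_Basis_vec:
  "(\<Prod>b\<in>(Basis :: (real^'d::finite) set). F b) = (\<Prod>i\<in>UNIV. F (axis i 1))"
proof -
  have Basis: "(Basis :: (real^'d) set) = range (\<lambda>i. axis i 1)"
    by (auto simp: Basis_vec_def)
  have "inj (\<lambda>i::'d. axis i (1::real))"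
    by (auto simp: inj_def axis_eq_axis)
  then show ?thesis
    unfolding Basis by (subst prod.reindex) simp_all
qed

lemma integral_lborel_vec_prod:
  fixes f :: "'d::finite \<Rightarrow> real \<Rightarrow> complex"
  assumes "\<And>i. integrable lborel (f i)"
  shows "(\<integral>x. (\<Prod>i\<in>UNIV. f i (x $ i)) \<partial>(lborel::(real^'d) measure)) = (\<Prod>i\<in>UNIV. \<integral>t. f i t \<partial>lborel)"
proof -
  define idx where "idx = inv (\<lambda>i::'d. axis i (1::real))"
  have idx: "idx (axis i 1) = i" for i
    unfolding idx_def by (rule inv_f_f) (auto simp: inj_def axis_eq_axis)
  have "(\<integral>x. (\<Prod>b\<in>Basis. f (idx b) (x \<bullet> b)) \<partial>(lborel::(real^'d) measure))
      = (\<Prod>b\<in>Basis. \<integral>t. f (idx b) t \<partial>lborel)"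
    by (rule integral_lborel_prod) (use assms in auto)
  then show ?thesis
    by (simp add: prod_Basis_vec cart_eq_inner_axis idx)
qed

lemma nn_integral_lborel_vec_prod:
  fixes f :: "'d::finite \<Rightarrow> real \<Rightarrow> ennreal"
  assumes "\<And>i. f i \<in> borel_measurable borel"
  shows "(\<integral>\<^sup>+x. (\<Prod>i\<in>UNIV. f i (x $ i)) \<partial>(lborel::(real^'d) measure)) = (\<Prod>i\<in>UNIV. \<integral>\<^sup>+t. f i t \<partial>lborel)"
proof -
  define idx where "idx = inv (\<lambda>i::'d. axis i (1::real))"
  have idx: "idx (axis i 1) = i" for i
    unfolding idx_def by (rule inv_f_f) (auto simp: inj_def axis_eq_axis)
  have "(\<integral>\<^sup>+x. (\<Prod>b\<in>Basis. f (idx b) (x \<bullet> b)) \<partial>(lborel::(real^'d) measure))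
      = (\<Prod>b\<in>Basis. \<integral>\<^sup>+t. f (idx b) t \<partial>lborel)"
    by (rule nn_integral_lborel_prod) (use assms in auto)
  then show ?thesis
    by (simp add: prod_Basis_vec cart_eq_inner_axis idx)
qed

lemma indicator_torus:
  "indicator torus x = (\<Prod>i\<in>UNIV. indicator {0..<2*pi} (x $ i) :: 'a::comm_semiring_1)"
  for x :: "real^'d::finite"
proof (cases "x \<in> torus")
  case False
  then obtain i where "x $ i \<notin> {0..<2*pi}"
    by (auto simp: torus_def)
  then have "(\<Prod>i\<in>UNIV. indicator {0..<2*pi} (x $ i) :: 'a) = 0"
    by (intro prod_zero bexI[of _ i]) auto
  then show ?thesis
    using False by simp
qed (simp add: torus_def)

lemma sets_torus [measurable]: "torus \<in> sets (borel :: (real^'d::finite) measure)"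
proof -
  have "torus = (\<Inter>i. {x::real^'d. 0 \<le> x $ i} \<inter> {x. x $ i < 2*pi})"
    by (auto simp: torus_def)
  also have "\<dots> \<in> sets borel"
    by measurable
  finally show ?thesis .
qed

lemma integrable_indicator_torus_mult:
  fixes f :: "real^'d::finite \<Rightarrow> complex"
  assumes "continuous_on UNIV f"
  shows "integrable lborel (\<lambda>x. indicator torus x * f x)"
proof -
  have "set_integrable lborel (cbox 0 (\<chi> i. 2*pi)) f"
    unfolding set_integrable_def
    by (rule borel_integrable_compact) (auto intro: continuous_on_subset[OF assms])
  moreover have "torus \<in> sets lborel"
    by measurable
  moreover have "torus \<subseteq> cbox (0::real^'d) (\<chi> i. 2*pi)"
    by (auto simp: torus_def mem_box_cart less_imp_le)
  ultimately have "set_integrable lborel torus f"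
    by (rule set_integrable_subset)
  moreover have "(\<lambda>x. indicator torus x *\<^sub>R f x) = (\<lambda>x. indicator torus x * f x)"
    by (auto simp: fun_eq_iff indicator_def)
  ultimately show ?thesis
    unfolding set_integrable_def by simp
qed

lemma L1norm_eq_integral: "L1norm f = 1 / (2*pi)^CARD('d) * (\<integral>x. indicator torus x * norm (f x) \<partial>lborel)"
  for f :: "real^'d::finite \<Rightarrow> complex"
  unfolding L1norm_def set_lebesgue_integral_def by simp

lemma L1norm_eq_nn_integral:
  fixes f :: "real^'d::finite \<Rightarrow> complex"
  assumes [measurable]: "f \<in> borel_measurable borel"
  shows "L1norm f = 1 / (2*pi)^CARD('d) * enn2real (\<integral>\<^sup>+x. indicator torus x * ennreal (norm (f x)) \<partial>lborel)"
proof -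
  have "(\<integral>x. indicator torus x * norm (f x) \<partial>lborel)
      = enn2real (\<integral>\<^sup>+x. ennreal (indicator torus x * norm (f x)) \<partial>lborel)"
    by (rule integral_eq_nn_integral) auto
  also have "(\<integral>\<^sup>+x. ennreal (indicator torus x * norm (f x)) \<partial>lborel)
      = (\<integral>\<^sup>+x. indicator torus x * ennreal (norm (f x)) \<partial>lborel)"
    by (intro nn_integral_cong) (auto simp: indicator_def)
  finally show ?thesis
    by (simp add: L1norm_eq_integral)
qed

lemma L1norm_nonneg: "0 \<le> L1norm f"
  unfolding L1norm_eq_integral by (intro mult_nonneg_nonneg integral_nonneg_AE AE_I2) auto

lemma borel_measurable_kdot [measurable]: "(\<lambda>x. kdot k x) \<in> borel_measurable borel"
  unfolding kdot_def by measurable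

lemma continuous_on_kdot [continuous_intros]: "continuous_on A (\<lambda>x. kdot k x)"
  unfolding kdot_def by (intro continuous_intros)

lemma kdot_diff: "kdot k (x - y) = kdot k x - kdot k y"
  unfolding kdot_def by (simp add: algebra_simps sum_subtractf)

lemma kdot_diff_left: "kdot (k - k') x = kdot k x - kdot k' x"
  unfolding kdot_def by (simp add: algebra_simps sum_subtractf)

lemma cis_sum: "finite A \<Longrightarrow> cis (sum f A) = (\<Prod>x\<in>A. cis (f x))"
  by (induct rule: finite_induct) (simp_all add: cis_mult[symmetric])

lemma integral_cis_period:
  fixes m :: int
  shows "(\<integral>t. indicator {0..<2*pi} t * cis (of_int m * t) \<partial>lborel) = (if m = 0 then 2*pi else 0)"
proof -
  have "AE t in lborel. indicator {0..2*pi} t *\<^sub>R cis (of_int m * t) = indicator {0..<2*pi} t * cis (of_int m * t)"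
    using AE_lborel_singleton[of "2*pi"] by eventually_elim (auto simp: indicator_def)
  then have "(\<integral>t. indicator {0..<2*pi} t * cis (of_int m * t) \<partial>lborel)
      = (\<integral>t. indicator {0..2*pi} t *\<^sub>R cis (of_int m * t) \<partial>lborel)"
    by (intro integral_cong_AE[symmetric]) measurable
  also have "\<dots> = (if m = 0 then 2*pi else 0)"
  proof (cases "m = 0")
    case True
    have "(\<integral>t. indicator {0..2*pi} t *\<^sub>R (1::complex) \<partial>lborel) = complex_of_real (2*pi) - complex_of_real 0"
      by (rule integral_FTC_atLeastAtMost)
         (auto intro!: has_vector_derivative_of_real[OF DERIV_ident, simplified])
    then show ?thesis
      using True by simp
  next
    case False
    define F where "F t = cis (of_int m * t) / (\<i> * of_int m)" for t
    have "(\<integral>t. indicator {0..2*pi} t *\<^sub>R cis (of_int m * t) \<partial>lborel) = F (2*pi) - F 0"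
    proof (rule integral_FTC_atLeastAtMost)
      fix x :: real
      show "(F has_vector_derivative cis (of_int m * x)) (at x within {0..2*pi})"
        unfolding F_def
        using has_vector_derivative_divide[OF has_vector_derivative_cis_mult[of "of_int m" x], of "\<i> * of_int m"]
          False by simp
    qed (auto intro!: continuous_intros)
    moreover have "cis (2*pi * of_int m) = 1"
      by (simp only: cis.ctr cos_int_2pin sin_int_2pin) (simp add: complex_eq_iff)
    then have "F (2*pi) = F 0"
      by (simp add: F_def mult.commute)
    ultimately show ?thesis
      using False by simp
  qed
  finally show ?thesis .
qed

lemma integral_torus_cis:
  fixes v :: "int^'d::finite"
  shows "(\<integral>x. indicator torus x * cis (kdot v x) \<partial>(lborel::(real^'d) measure))
    = (if v = 0 then (2*pi)^CARD('d) else 0)"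
proof -
  have "(\<integral>x. indicator torus x * cis (kdot v x) \<partial>(lborel::(real^'d) measure))
      = (\<integral>x. (\<Prod>j\<in>UNIV. indicator {0..<2*pi} (x $ j) * cis (of_int (v $ j) * x $ j)) \<partial>lborel)"
    by (intro Bochner_Integration.integral_cong refl) (simp add: indicator_torus kdot_def cis_sum prod.distrib)
  also have "\<dots> = (\<Prod>j\<in>UNIV. \<integral>t. indicator {0..<2*pi} t * cis (of_int (v $ j) * t) \<partial>lborel)"
  proof (rule integral_lborel_vec_prod)
    fix j
    have ae: "AE t in lborel. indicator {0..2*pi} t *\<^sub>R cis (of_int (v $ j) * t) = indicator {0..<2*pi} t * cis (of_int (v $ j) * t)"
      using AE_lborel_singleton[of "2*pi"] by eventually_elim (auto simp: indicator_def)
    have "integrable lborel (\<lambda>t. indicator {0..2*pi} t *\<^sub>R cis (of_int (v $ j) * t))"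
      by (rule borel_integrable_compact) (auto intro!: continuous_intros)
    then show "integrable lborel (\<lambda>t. indicator {0..<2*pi} t * cis (of_int (v $ j) * t))"
      by (rule integrable_cong_AE_imp[OF _ _ ae]) measurable
  qed
  also have "\<dots> = (if v = 0 then (2*pi)^CARD('d) else 0)"
  proof (cases "v = 0")
    case False
    then obtain j where "v $ j \<noteq> 0"
      by (metis vec_eq_iff zero_index)
    then show ?thesis
      using False by (intro trans[OF prod_zero]) (auto simp: integral_cis_period)
  qed (use integral_cis_period[of 0] in \<open>simp add: power_mult_distrib\<close>)
  finally show ?thesis .
qed

lemma integrable_mult_bounded:
  fixes h f :: "'a \<Rightarrow> 'b::{real_normed_field, banach, second_countable_topology}"
  assumes "integrable M h" "f \<in> borel_measurable M" "\<And>y. norm (f y) \<le> B"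
  shows "integrable M (\<lambda>y. h y * f y)"
proof (rule Bochner_Integration.integrable_bound[where f="\<lambda>y. B *\<^sub>R h y"])
  show "integrable M (\<lambda>y. B *\<^sub>R h y)"
    using assms(1) by simp
  show "(\<lambda>y. h y * f y) \<in> borel_measurable M"
    using assms(1,2) by measurable
  have "norm (h y * f y) \<le> norm (B *\<^sub>R h y)" for y
  proof -
    have "norm (h y * f y) \<le> norm (h y) * \<bar>B\<bar>"
      unfolding norm_mult using order.trans[OF assms(3) abs_ge_self] by (intro mult_left_mono) auto
    then show ?thesis
      by (simp add: mult.commute)
  qed
  then show "AE y in M. norm (h y * f y) \<le> norm (B *\<^sub>R h y)"
    by simp
qed

lemma norm_integral_le_nn_integral: "ennreal (norm (integral\<^sup>L M f)) \<le> (\<integral>\<^sup>+x. ennreal (norm (f x)) \<partial>M)"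
  by (cases "integrable M f") (simp_all add: integral_norm_bound_ennreal not_integrable_integral_eq)

lemma nn_integral_convolution_le:
  fixes h K :: "'a::euclidean_space \<Rightarrow> complex"
  assumes "finite_measure \<nu>" and sets: "sets \<nu> = sets borel" and h: "integrable \<nu> h"
    and [measurable]: "K \<in> borel_measurable borel" "A \<in> sets borel"
    and K: "\<And>y. (\<integral>\<^sup>+x. indicator A x * ennreal (norm (K (x - y))) \<partial>lborel) \<le> C"
  shows "(\<integral>\<^sup>+x. indicator A x * ennreal (norm (\<integral>y. h y * K (x - y) \<partial>\<nu>)) \<partial>lborel)
    \<le> C * ennreal (\<integral>y. norm (h y) \<partial>\<nu>)"
proof -
  interpret \<nu>: finite_measure \<nu>
    by fact
  interpret pair_sigma_finite lborel \<nu> ..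
  have [measurable]: "h \<in> borel_measurable borel"
    using borel_measurable_integrable[OF h] unfolding measurable_cong_sets[OF sets refl] .
  have [measurable]: "(\<lambda>(x, y). indicator A x * (ennreal (norm (h y)) * ennreal (norm (K (x - y)))))
      \<in> borel_measurable (lborel \<Otimes>\<^sub>M \<nu>)"
  proof -
    have "sets (lborel \<Otimes>\<^sub>M \<nu>) = sets (borel \<Otimes>\<^sub>M (borel :: 'a measure))"
      by (rule sets_pair_measure_cong) (simp_all add: sets)
    then have "borel_measurable (lborel \<Otimes>\<^sub>M \<nu>) = borel_measurable (borel \<Otimes>\<^sub>M (borel :: 'a measure))"
      by (rule measurable_cong_sets) simp
    show ?thesis
      unfolding \<open>borel_measurable (lborel \<Otimes>\<^sub>M \<nu>) = _\<close> by measurable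
  qed
  have "(\<integral>\<^sup>+x. indicator A x * ennreal (norm (\<integral>y. h y * K (x - y) \<partial>\<nu>)) \<partial>lborel)
      \<le> (\<integral>\<^sup>+x. indicator A x * (\<integral>\<^sup>+y. ennreal (norm (h y)) * ennreal (norm (K (x - y))) \<partial>\<nu>) \<partial>lborel)"
    using norm_integral_le_nn_integral[of \<nu> "\<lambda>y. h y * K (_ - y)"]
    by (intro nn_integral_mono mult_left_mono) (auto simp: norm_mult ennreal_mult)
  also have "\<dots> = (\<integral>\<^sup>+x. (\<integral>\<^sup>+y. indicator A x * (ennreal (norm (h y)) * ennreal (norm (K (x - y)))) \<partial>\<nu>) \<partial>lborel)"
    by (intro nn_integral_cong nn_integral_cmult[symmetric])
       (unfold measurable_cong_sets[OF sets refl], measurable)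
  also have "\<dots> = (\<integral>\<^sup>+y. (\<integral>\<^sup>+x. ennreal (norm (h y)) * (indicator A x * ennreal (norm (K (x - y)))) \<partial>lborel) \<partial>\<nu>)"
    using Fubini'[of "\<lambda>x y. indicator A x * (ennreal (norm (h y)) * ennreal (norm (K (x - y))))"]
    by (simp add: mult_ac)
  also have "\<dots> = (\<integral>\<^sup>+y. ennreal (norm (h y)) * (\<integral>\<^sup>+x. indicator A x * ennreal (norm (K (x - y))) \<partial>lborel) \<partial>\<nu>)"
    by (intro nn_integral_cong nn_integral_cmult) measurable
  also have "\<dots> \<le> (\<integral>\<^sup>+y. ennreal (norm (h y)) * C \<partial>\<nu>)"
    by (intro nn_integral_mono mult_left_mono K) auto
  also have "\<dots> = C * ennreal (\<integral>y. norm (h y) \<partial>\<nu>)"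
    using h by (subst nn_integral_multc) (simp_all add: nn_integral_eq_integral mult.commute
        measurable_cong_sets[OF sets refl])
  finally show ?thesis .
qed

section \<open>Dyadic blocks as convolutions\<close>

definition dyadic_box :: "('d::finite \<Rightarrow> nat) \<Rightarrow> (int^'d) set" where
  "dyadic_box l = {k. \<forall>j. \<bar>k $ j\<bar> \<le> 2 ^ (l j + 1)}"

definition tensor_phi :: "(real \<Rightarrow> real) \<Rightarrow> ('d::finite \<Rightarrow> nat) \<Rightarrow> int^'d \<Rightarrow> real" where
  "tensor_phi \<psi> l k = (\<Prod>j\<in>UNIV. phi \<psi> (l j) (real_of_int (k $ j)))"

definition block_kernel :: "(real \<Rightarrow> real) \<Rightarrow> ('d::finite \<Rightarrow> nat) \<Rightarrow> real^'d \<Rightarrow> complex" where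
  "block_kernel \<psi> l z = (\<Sum>k\<in>dyadic_box l. complex_of_real (tensor_phi \<psi> l k) * cis (kdot k z))"

lemma block_eq_sum:
  "block \<psi> g l x = (\<Sum>k\<in>dyadic_box l. complex_of_real (tensor_phi \<psi> l k) * g k * cis (kdot k x))"
  unfolding block_def dyadic_box_def tensor_phi_def ..

lemma bij_betw_dyadic_box:
  "bij_betw vec_lambda (PiE UNIV (\<lambda>j. {-int (2^(l j+1))..int (2^(l j+1))})) (dyadic_box l)"
proof (rule bij_betwI[where g=vec_nth])
  have "(x::int) \<in> {-B..B} \<longleftrightarrow> \<bar>x\<bar> \<le> B" for x B
    by auto
  then show "vec_lambda \<in> PiE UNIV (\<lambda>j. {-int (2^(l j+1))..int (2^(l j+1))}) \<rightarrow> dyadic_box l"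
    and "vec_nth \<in> dyadic_box l \<rightarrow> PiE UNIV (\<lambda>j. {-int (2^(l j+1))..int (2^(l j+1))})"
    by (auto simp: dyadic_box_def PiE_def Pi_def simp del: atLeastAtMost_iff)
qed auto

lemma finite_dyadic_box: "finite (dyadic_box l)"
  using bij_betw_finite[OF bij_betw_dyadic_box] by (simp add: finite_PiE)

lemma block_kernel_eq_prod:
  "block_kernel \<psi> l z = (\<Prod>j\<in>UNIV. \<Sum>k\<in>{-int (2^(l j+1))..int (2^(l j+1))}.
      complex_of_real (phi \<psi> (l j) (of_int k)) * cis (of_int k * z $ j))"
proof -
  have "(\<Prod>j\<in>UNIV. \<Sum>k\<in>{-int (2^(l j+1))..int (2^(l j+1))}.
        complex_of_real (phi \<psi> (l j) (of_int k)) * cis (of_int k * z $ j))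
      = (\<Sum>k\<in>PiE UNIV (\<lambda>j. {-int (2^(l j+1))..int (2^(l j+1))}).
          \<Prod>j\<in>UNIV. complex_of_real (phi \<psi> (l j) (of_int (k j))) * cis (of_int (k j) * z $ j))"
    by (rule prod_sum_PiE) auto
  also have "\<dots> = (\<Sum>k\<in>dyadic_box l. \<Prod>j\<in>UNIV. complex_of_real (phi \<psi> (l j) (of_int (k $ j))) * cis (of_int (k $ j) * z $ j))"
    using sum.reindex_bij_betw[OF bij_betw_dyadic_box,
        of "\<lambda>k. \<Prod>j\<in>UNIV. complex_of_real (phi \<psi> (l j) (of_int (k $ j))) * cis (of_int (k $ j) * z $ j)"]
    by simp
  also have "\<dots> = block_kernel \<psi> l z"
    unfolding block_kernel_def tensor_phi_def kdot_def
    by (intro sum.cong refl) (simp add: prod.distrib cis_sum)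
  finally show ?thesis ..
qed

lemma borel_measurable_block_kernel [measurable]: "block_kernel \<psi> l \<in> borel_measurable borel"
  unfolding block_kernel_def by measurable

lemma borel_measurable_block [measurable]: "block \<psi> g l \<in> borel_measurable borel"
  unfolding block_def by measurable

lemma block_scaleR: "block \<psi> (\<lambda>k. complex_of_real c * g k) l x = complex_of_real c * block \<psi> g l x"
  unfolding block_def by (simp add: sum_distrib_left mult_ac)

lemma block_eq_convolution:
  assumes "meas_repr g \<nu> h"
  shows "block \<psi> g l x = (\<integral>y. h y * block_kernel \<psi> l (x - y) \<partial>\<nu>)"
proof -
  have sets: "sets \<nu> = sets borel" and h: "integrable \<nu> h"
    and g: "\<And>k. g k = (\<integral>y. h y * cis (- kdot k y) \<partial>\<nu>)"
    using assms unfolding meas_repr_def by auto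
  have integrable: "integrable \<nu> (\<lambda>y. h y * (complex_of_real (tensor_phi \<psi> l k) * cis (kdot k (x - y))))" for k
  proof (rule integrable_mult_bounded[OF h, where B="\<bar>tensor_phi \<psi> l k\<bar>"])
    show "(\<lambda>y. complex_of_real (tensor_phi \<psi> l k) * cis (kdot k (x - y))) \<in> borel_measurable \<nu>"
      unfolding measurable_cong_sets[OF sets refl] by measurable
  qed (simp add: norm_mult)
  have "complex_of_real (tensor_phi \<psi> l k) * g k * cis (kdot k x)
      = (\<integral>y. h y * (complex_of_real (tensor_phi \<psi> l k) * cis (kdot k (x - y))) \<partial>\<nu>)" for k
  proof -
    have "complex_of_real (tensor_phi \<psi> l k) * g k * cis (kdot k x)
        = (\<integral>y. h y * cis (- kdot k y) * (complex_of_real (tensor_phi \<psi> l k) * cis (kdot k x)) \<partial>\<nu>)"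
      unfolding g integral_mult_left_zero by (simp add: mult_ac)
    also have "\<dots> = (\<integral>y. h y * (complex_of_real (tensor_phi \<psi> l k) * cis (kdot k (x - y))) \<partial>\<nu>)"
      by (intro Bochner_Integration.integral_cong refl) (simp add: kdot_diff cis_mult mult_ac)
    finally show ?thesis .
  qed
  then have "block \<psi> g l x
      = (\<Sum>k\<in>dyadic_box l. \<integral>y. h y * (complex_of_real (tensor_phi \<psi> l k) * cis (kdot k (x - y))) \<partial>\<nu>)"
    unfolding block_eq_sum by simp
  also have "\<dots> = (\<integral>y. h y * block_kernel \<psi> l (x - y) \<partial>\<nu>)"
    unfolding block_kernel_def sum_distrib_left by (rule Bochner_Integration.integral_sum[symmetric, OF integrable])
  finally show ?thesis .
qed

context admissible_cutoff
begin

lemma nn_integral_torus_block_kernel_le: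
  "(\<integral>\<^sup>+x. indicator torus x * ennreal (norm (block_kernel \<psi> l (x - y))) \<partial>(lborel::(real^'d::finite) measure))
    \<le> ennreal (2 * pi * c_psi \<psi>) ^ CARD('d)"
proof -
  have "(\<integral>\<^sup>+x. indicator torus x * ennreal (norm (block_kernel \<psi> l (x - y))) \<partial>(lborel::(real^'d) measure))
      = (\<integral>\<^sup>+x. (\<Prod>j\<in>UNIV. indicator {0..<2*pi} (x $ j) *
          ennreal (norm (\<Sum>k\<in>{-int (2^(l j+1))..int (2^(l j+1))}.
            complex_of_real (phi \<psi> (l j) (of_int k)) * cis (of_int k * (x $ j - y $ j))))) \<partial>lborel)"
    by (intro nn_integral_cong)
       (simp add: block_kernel_eq_prod indicator_torus prod.distrib prod_norm prod_ennreal)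
  also have "\<dots> = (\<Prod>j\<in>UNIV. \<integral>\<^sup>+t. indicator {0..<2*pi} t *
      ennreal (norm (\<Sum>k\<in>{-int (2^(l j+1))..int (2^(l j+1))}.
        complex_of_real (phi \<psi> (l j) (of_int k)) * cis (of_int k * (t - y $ j)))) \<partial>lborel)"
    by (rule nn_integral_lborel_vec_prod) measurable
  also have "\<dots> \<le> (\<Prod>j\<in>(UNIV::'d set). ennreal (2 * pi * c_psi \<psi>))"
    by (intro prod_mono_ennreal nn_integral_phi_trig_poly_le)
  finally show ?thesis
    by simp
qed

lemma tensor_phi_outside: "k \<notin> dyadic_box l \<Longrightarrow> tensor_phi \<psi> l k = 0"
proof -
  assume "k \<notin> dyadic_box l"
  then obtain j where "\<not> \<bar>k $ j\<bar> \<le> 2 ^ (l j + 1)"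
    by (auto simp: dyadic_box_def)
  then have "real_of_int (2 ^ (l j + 1)) < real_of_int \<bar>k $ j\<bar>"
    by (simp only: of_int_less_iff not_le)
  then have "real (2 ^ (l j + 1)) < \<bar>real_of_int (k $ j)\<bar>"
    by simp
  then have "phi \<psi> (l j) (real_of_int (k $ j)) = 0"
    by (rule phi_vanishes)
  then show ?thesis
    unfolding tensor_phi_def by (intro prod_zero bexI[of _ j]) auto
qed

lemma L1norm_block_le:
  fixes g :: "'d::finite pdist"
  assumes "meas_repr g \<nu> h"
  shows "L1norm (block \<psi> g l) \<le> c_psi \<psi> ^ CARD('d) * (\<integral>y. norm (h y) \<partial>\<nu>)"
proof -
  have \<nu>: "finite_measure \<nu>" "sets \<nu> = sets borel" "integrable \<nu> h"
    using assms unfolding meas_repr_def by auto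
  have c: "0 \<le> (2 * pi * c_psi \<psi>) ^ CARD('d)"
    using c_psi_nonneg[of \<psi>] by simp
  have "ennreal (2 * pi * c_psi \<psi>) ^ CARD('d) = ennreal ((2 * pi * c_psi \<psi>) ^ CARD('d))"
    using c_psi_nonneg[of \<psi>] by (simp add: ennreal_power)
  note kernel = nn_integral_torus_block_kernel_le[where 'd='d, unfolded this]
  have "(\<integral>\<^sup>+x. indicator torus x * ennreal (norm (\<integral>y. h y * block_kernel \<psi> l (x - y) \<partial>\<nu>)) \<partial>lborel)
      \<le> ennreal ((2 * pi * c_psi \<psi>) ^ CARD('d)) * ennreal (\<integral>y. norm (h y) \<partial>\<nu>)"
    by (rule nn_integral_convolution_le[OF \<nu> _ _ kernel]; measurable)
  then have "(\<integral>\<^sup>+x. indicator torus x * ennreal (norm (block \<psi> g l x)) \<partial>lborel)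
      \<le> ennreal ((2 * pi * c_psi \<psi>) ^ CARD('d) * (\<integral>y. norm (h y) \<partial>\<nu>))"
    unfolding block_eq_convolution[OF assms] ennreal_mult[OF c integral_nonneg_AE[OF AE_I2[OF norm_ge_zero]]] .
  then have "enn2real (\<integral>\<^sup>+x. indicator torus x * ennreal (norm (block \<psi> g l x)) \<partial>lborel)
      \<le> (2 * pi * c_psi \<psi>) ^ CARD('d) * (\<integral>y. norm (h y) \<partial>\<nu>)"
    using c by (intro enn2real_leI) simp_all
  then have "L1norm (block \<psi> g l) \<le> 1 / (2*pi)^CARD('d) * ((2 * pi * c_psi \<psi>) ^ CARD('d) * (\<integral>y. norm (h y) \<partial>\<nu>))"
    unfolding L1norm_eq_nn_integral[OF borel_measurable_block] by (intro mult_left_mono) auto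
  then show ?thesis
    by (simp add: power_mult_distrib)
qed

text \<open>The coefficient is recovered by integrating the block against a character over the torus.\<close>

lemma norm_block_coeff_le_L1norm:
  fixes g :: "'d::finite pdist"
  shows "norm (complex_of_real (tensor_phi \<psi> l k) * g k) \<le> L1norm (block \<psi> g l)"
proof -
  define a where "a k' = complex_of_real (tensor_phi \<psi> l k') * g k'" for k'
  have "indicator torus x * (block \<psi> g l x * cis (- kdot k x))
      = (\<Sum>k'\<in>dyadic_box l. a k' * (indicator torus x * cis (kdot (k' - k) x)))" for x :: "real^'d"
  proof -
    have "cis (kdot (k' - k) x) = cis (kdot k' x) * cis (- kdot k x)" for k'
      by (simp add: cis_mult kdot_diff_left)
    then show ?thesis
      unfolding block_eq_sum a_def by (simp add: sum_distrib_left sum_distrib_right mult_ac)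
  qed
  then have "(\<integral>x. indicator torus x * (block \<psi> g l x * cis (- kdot k x)) \<partial>lborel)
      = (\<Sum>k'\<in>dyadic_box l. a k' * (\<integral>x. indicator torus x * cis (kdot (k' - k) x) \<partial>lborel))"
    by (simp add: Bochner_Integration.integral_sum integrable_indicator_torus_mult continuous_intros)
  also have "\<dots> = (\<Sum>k'\<in>dyadic_box l. if k' = k then a k' * (2*pi)^CARD('d) else 0)"
    by (intro sum.cong refl) (simp add: integral_torus_cis)
  also have "\<dots> = a k * (2*pi)^CARD('d)"
    using tensor_phi_outside[of k l] by (auto simp: finite_dyadic_box a_def)
  finally have "norm (a k) * (2*pi)^CARD('d)
      = norm (\<integral>x. indicator torus x * (block \<psi> g l x * cis (- kdot k x)) \<partial>lborel)"
    by (simp add: norm_mult norm_power)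
  also have "\<dots> \<le> (\<integral>x. norm (indicator torus x * (block \<psi> g l x * cis (- kdot k x))) \<partial>lborel)"
    by (rule integral_norm_bound)
  also have "\<dots> = (\<integral>x. indicator torus x * norm (block \<psi> g l x) \<partial>lborel)"
    by (intro Bochner_Integration.integral_cong refl) (simp add: norm_mult indicator_def)
  also have "\<dots> = (2*pi)^CARD('d) * L1norm (block \<psi> g l)"
    unfolding L1norm_eq_integral by simp
  finally show ?thesis
    unfolding a_def by simp
qed

text \<open>Since at most two one-dimensional levels meet at any integer, at most \<open>2\<^sup>d\<close> blocks contain
  a given frequency.\<close>

lemma tensor_phi_partition:
  fixes k :: "int^'d::finite"
  obtains L where "finite L" "card L \<le> 2^CARD('d)" "(\<Sum>l\<in>L. tensor_phi \<psi> l k) = 1"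
proof
  define L where "L = PiE (UNIV::'d set) (\<lambda>j. phi_levels (real_of_int (k $ j)))"
  show "finite L"
    unfolding L_def by (intro finite_PiE finite_phi_levels) auto
  have "card L = (\<Prod>j\<in>UNIV. card (phi_levels (real_of_int (k $ j))))"
    unfolding L_def by (rule card_PiE) simp
  also have "\<dots> \<le> (\<Prod>j\<in>(UNIV::'d set). 2)"
    by (intro prod_mono) (auto simp: card_phi_levels)
  finally show "card L \<le> 2^CARD('d)"
    by simp
  have "(\<Sum>l\<in>L. tensor_phi \<psi> l k) = (\<Prod>j\<in>UNIV. \<Sum>l\<in>phi_levels (real_of_int (k $ j)). phi \<psi> l (real_of_int (k $ j)))"
    unfolding L_def tensor_phi_def by (rule prod_sum_PiE[symmetric]) (auto intro: finite_phi_levels)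
  then show "(\<Sum>l\<in>L. tensor_phi \<psi> l k) = 1"
    by (simp add: sum_phi_levels)
qed

end

section \<open>Embeddings and approximation numbers\<close>

definition embeds_with_norm :: "'d::finite dspace \<Rightarrow> 'd dspace \<Rightarrow> real \<Rightarrow> bool" where
  "embeds_with_norm X X' C \<longleftrightarrow> (\<forall>g\<in>fst X. g \<in> fst X' \<and> snd X' g \<le> C * snd X g)"

definition positively_homogeneous :: "'d::finite dspace \<Rightarrow> bool" where
  "positively_homogeneous X \<longleftrightarrow> (\<forall>g\<in>fst X. \<forall>c>0.
     (\<lambda>k. complex_of_real c * g k) \<in> fst X \<and> snd X (\<lambda>k. complex_of_real c * g k) \<le> c * snd X g)"

lemma clinear_on_subset: "clinear_on X' A \<Longrightarrow> X \<subseteq> X' \<Longrightarrow> clinear_on X A"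
  unfolding clinear_on_def by blast

lemma rank_lt_subset: "rank_lt X' A n \<Longrightarrow> X \<subseteq> X' \<Longrightarrow> rank_lt X A n"
  unfolding rank_lt_def by blast

lemma INF_ereal_cmult:
  assumes "0 < C"
  shows "(INF A\<in>S. ereal C * f A) = ereal C * (INF A\<in>S. f A)"
proof -
  have "{ereal C * x |x. x \<in> f ` S} = (\<lambda>A. ereal C * f A) ` S"
    by auto
  then show ?thesis
    using ereal_Inf_cmult[OF assms, of "\<lambda>x. x \<in> f ` S"] by simp
qed

text \<open>Rescaling the unit ball of \<open>X\<close> by \<open>1/C\<close> puts it into the unit ball of \<open>X'\<close>.\<close>

lemma incl_diff_norm_le:
  assumes emb: "embeds_with_norm X X' C" and hom: "positively_homogeneous X" and "0 < C"
    and Y: "\<And>f c. 0 < c \<Longrightarrow> snd Y (\<lambda>k. complex_of_real c * f k) = c * snd Y f"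
    and lin: "clinear_on (fst X') A"
  shows "incl_diff_norm X Y A \<le> ereal C * incl_diff_norm X' Y A"
  unfolding incl_diff_norm_def
proof (rule SUP_least)
  fix g
  assume g: "g \<in> {g \<in> fst X. snd X g \<le> 1}"
  define g' where "g' k = complex_of_real (1/C) * g k" for k
  have "0 < 1/C"
    using \<open>0 < C\<close> by simp
  then have "g' \<in> fst X" and "snd X g' \<le> 1/C * snd X g"
    using hom g unfolding positively_homogeneous_def g'_def by blast+
  moreover from emb \<open>g' \<in> fst X\<close> have g'X': "g' \<in> fst X'" and "snd X' g' \<le> C * snd X g'"
    unfolding embeds_with_norm_def by auto
  ultimately have "snd X' g' \<le> C * (1/C * snd X g)"
    using \<open>0 < C\<close> by (meson order.trans mult_left_mono less_imp_le)
  then have "g' \<in> {g \<in> fst X'. snd X' g \<le> 1}"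
    using g g'X' \<open>0 < C\<close> by simp
  then have le: "ereal (snd Y (\<lambda>k. g' k - A g' k))
      \<le> (SUP g\<in>{g \<in> fst X'. snd X' g \<le> 1}. ereal (snd Y (\<lambda>k. g k - A g k)))"
    by (rule SUP_upper)
  have g_eq: "g = (\<lambda>k. complex_of_real C * g' k)"
    using \<open>0 < C\<close> by (simp add: g'_def fun_eq_iff)
  then have "A g = (\<lambda>k. complex_of_real C * A g' k)"
    using lin g'X' unfolding clinear_on_def by metis
  then have "(\<lambda>k. g k - A g k) = (\<lambda>k. complex_of_real C * (g' k - A g' k))"
    by (subst (1) g_eq) (simp add: algebra_simps)
  then have "ereal (snd Y (\<lambda>k. g k - A g k)) = ereal C * ereal (snd Y (\<lambda>k. g' k - A g' k))"
    using Y \<open>0 < C\<close> by simp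
  also have "\<dots> \<le> ereal C * (SUP g\<in>{g \<in> fst X'. snd X' g \<le> 1}. ereal (snd Y (\<lambda>k. g k - A g k)))"
    using le \<open>0 < C\<close> by (intro ereal_mult_left_mono) auto
  finally show "ereal (snd Y (\<lambda>k. g k - A g k))
      \<le> ereal C * (SUP g\<in>{g \<in> fst X'. snd X' g \<le> 1}. ereal (snd Y (\<lambda>k. g k - A g k)))" .
qed

lemma approx_num_le:
  assumes emb: "embeds_with_norm X X' C" and hom: "positively_homogeneous X" and "0 < C"
    and Y: "\<And>f c. 0 < c \<Longrightarrow> snd Y (\<lambda>k. complex_of_real c * f k) = c * snd Y f"
  shows "approx_num n X Y \<le> ereal C * approx_num n X' Y"
proof -
  have sub: "fst X \<subseteq> fst X'"
    using emb unfolding embeds_with_norm_def by blast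
  have "approx_num n X Y \<le> ereal C * incl_diff_norm X' Y A"
    if "clinear_on (fst X') A" "A ` fst X' \<subseteq> fst Y" "rank_lt (fst X') A n" for A
  proof -
    have "approx_num n X Y \<le> incl_diff_norm X Y A"
      unfolding approx_num_def using that sub
      by (intro INF_lower) (auto intro: clinear_on_subset rank_lt_subset)
    also have "\<dots> \<le> ereal C * incl_diff_norm X' Y A"
      by (rule incl_diff_norm_le[OF emb hom \<open>0 < C\<close> Y that(1)])
    finally show ?thesis .
  qed
  then have "approx_num n X Y
      \<le> (INF A\<in>{A. clinear_on (fst X') A \<and> A ` fst X' \<subseteq> fst Y \<and> rank_lt (fst X') A n}. ereal C * incl_diff_norm X' Y A)"
    by (intro INF_greatest) auto
  also have "\<dots> = ereal C * approx_num n X' Y"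
    unfolding approx_num_def by (rule INF_ereal_cmult[OF \<open>0 < C\<close>])
  finally show ?thesis .
qed

lemma approx_num_nonneg:
  assumes "g \<in> fst X" "snd X g \<le> 1" and "\<And>f. 0 \<le> snd Y f"
  shows "0 \<le> approx_num n X Y"
  unfolding approx_num_def incl_diff_norm_def
proof (intro INF_greatest)
  fix A
  have "ereal 0 \<le> ereal (snd Y (\<lambda>k. g k - A g k))"
    using assms(3) by simp
  also have "\<dots> \<le> (SUP g\<in>{g \<in> fst X. snd X g \<le> 1}. ereal (snd Y (\<lambda>k. g k - A g k)))"
    using assms(1,2) by (intro SUP_upper) auto
  finally show "0 \<le> (SUP g\<in>{g \<in> fst X. snd X g \<le> 1}. ereal (snd Y (\<lambda>k. g k - A g k)))"
    by (simp add: zero_ereal_def)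
qed

text \<open>The case \<open>C = 0\<close> is covered by the junk value \<open>1 / 0 = 0\<close>.\<close>

lemma approx_num_div_le:
  assumes emb: "embeds_with_norm X X' C" and hom: "positively_homogeneous X" and "0 \<le> C"
    and Y: "\<And>f c. 0 < c \<Longrightarrow> snd Y (\<lambda>k. complex_of_real c * f k) = c * snd Y f" "\<And>f. 0 \<le> snd Y f"
    and "g \<in> fst X'" "snd X' g \<le> 1"
  shows "ereal (1 / C) * approx_num n X Y \<le> approx_num n X' Y"
proof (cases "C = 0")
  case True
  then show ?thesis
    using approx_num_nonneg[OF assms(6,7) Y(2)] by (simp add: zero_ereal_def[symmetric])
next
  case False
  with \<open>0 \<le> C\<close> have "0 < C"
    by simp
  then have "ereal (1 / C) * approx_num n X Y \<le> ereal (1 / C) * (ereal C * approx_num n X' Y)"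
    by (intro ereal_mult_left_mono approx_num_le[OF emb hom _ Y(1)]) auto
  also have "\<dots> = approx_num n X' Y"
    using \<open>0 < C\<close> by (simp add: mult.assoc[symmetric] one_ereal_def[symmetric])
  finally show ?thesis .
qed

lemma Fspace_norm_nonneg: "0 \<le> snd (Fspace w) f"
  by (simp add: Fspace_def infsum_nonneg)

lemma Fspace_norm_scale:
  assumes "0 \<le> c"
  shows "snd (Fspace w) (\<lambda>k. complex_of_real c * f k) = c * snd (Fspace w) f"
proof -
  have "(\<Sum>\<^sub>\<infinity>k. (norm (complex_of_real c * f k))\<^sup>2 / (w k)\<^sup>2) = (\<Sum>\<^sub>\<infinity>k. c\<^sup>2 * ((norm (f k))\<^sup>2 / (w k)\<^sup>2))"
    by (intro infsum_cong) (simp add: norm_mult power_mult_distrib)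
  also have "\<dots> = c\<^sup>2 * (\<Sum>\<^sub>\<infinity>k. (norm (f k))\<^sup>2 / (w k)\<^sup>2)"
    by (rule infsum_cmult_right')
  finally show ?thesis
    unfolding Fspace_def using assms by (simp add: real_sqrt_mult)
qed

lemma le_mult_Inf:
  fixes X :: "real set"
  assumes "\<And>x. x \<in> X \<Longrightarrow> s \<le> a * x" "X \<noteq> {}" "0 \<le> a" "\<And>x. x \<in> X \<Longrightarrow> 0 \<le> x"
  shows "s \<le> a * Inf X"
proof (cases "a = 0")
  case True
  then show ?thesis
    using assms(1,2) by fastforce
next
  case False
  with assms(3) have "0 < a"
    by simp
  then have "s / a \<le> Inf X"
    using assms(1,2) by (intro cInf_greatest) (auto simp: divide_le_eq mult.commute)
  then show ?thesis
    using \<open>0 < a\<close> by (simp add: divide_le_eq mult.commute)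
qed

lemma tempered_scale: "tempered g \<Longrightarrow> tempered (\<lambda>k. complex_of_real c * g k)"
proof -
  assume "tempered g"
  then obtain C N where CN: "\<And>k. norm (g k) \<le> C * (1 + (\<Sum>i\<in>UNIV. real_of_int \<bar>k $ i\<bar>)) ^ N"
    unfolding tempered_def by blast
  have "norm (complex_of_real c * g k) \<le> (\<bar>c\<bar> * C) * (1 + (\<Sum>i\<in>UNIV. real_of_int \<bar>k $ i\<bar>)) ^ N" for k
    using mult_left_mono[OF CN[of k], of "\<bar>c\<bar>"] by (simp add: norm_mult mult.assoc)
  then show ?thesis
    unfolding tempered_def by blast
qed

lemma L1norm_scale:
  "0 \<le> c \<Longrightarrow> L1norm (\<lambda>x. complex_of_real c * f x) = c * L1norm f"
  unfolding L1norm_eq_integral by (simp add: norm_mult mult_ac)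

lemma positively_homogeneous_Sspace: "positively_homogeneous (Sspace \<psi>)"
  unfolding positively_homogeneous_def
proof (intro ballI allI impI)
  fix g :: "'d::finite pdist" and c :: real
  assume g: "g \<in> fst (Sspace \<psi>)" and "0 < c"
  then have bdd: "bdd_above (range (\<lambda>l. L1norm (block \<psi> g l)))" and "tempered g"
    unfolding Sspace_def by auto
  have eq: "L1norm (block \<psi> (\<lambda>k. complex_of_real c * g k) l) = c * L1norm (block \<psi> g l)" for l
    unfolding block_scaleR using \<open>0 < c\<close> by (simp add: L1norm_scale)
  obtain M where "\<And>l. L1norm (block \<psi> g l) \<le> M"
    using bdd by (auto simp: bdd_above_def)
  then have "bdd_above (range (\<lambda>l. c * L1norm (block \<psi> g l)))"
    using \<open>0 < c\<close> by (intro bdd_aboveI2[where M="c * M"] mult_left_mono) auto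
  moreover have "(SUP l. c * L1norm (block \<psi> g l)) \<le> c * (SUP l. L1norm (block \<psi> g l))"
    using \<open>0 < c\<close> by (intro cSUP_least) (auto intro!: mult_left_mono cSUP_upper bdd)
  ultimately show "(\<lambda>k. complex_of_real c * g k) \<in> fst (Sspace \<psi>)
      \<and> snd (Sspace \<psi>) (\<lambda>k. complex_of_real c * g k) \<le> c * snd (Sspace \<psi>) g"
    using tempered_scale[OF \<open>tempered g\<close>] unfolding Sspace_def by (simp add: eq)
qed

lemma zero_in_Sspace:
  "(\<lambda>k::int^'d::finite. 0) \<in> fst (Sspace \<psi>)" "snd (Sspace \<psi>) (\<lambda>k::int^'d. 0) = 0"
proof -
  have block: "block \<psi> (\<lambda>k::int^'d. 0) l = (\<lambda>x. 0)" for l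
    by (simp add: block_def fun_eq_iff)
  have L1norm: "L1norm (\<lambda>x::real^'d. 0) = 0"
    by (simp add: L1norm_def)
  have "tempered (\<lambda>k::int^'d. 0)"
    unfolding tempered_def by (intro exI[where x=0]) simp
  then show "(\<lambda>k::int^'d. 0) \<in> fst (Sspace \<psi>)" "snd (Sspace \<psi>) (\<lambda>k::int^'d. 0) = 0"
    unfolding Sspace_def by (simp_all add: block L1norm)
qed

lemma positively_homogeneous_Mspace: "positively_homogeneous Mspace"
  unfolding positively_homogeneous_def
proof (intro ballI allI impI)
  fix g :: "'d::finite pdist" and c :: real
  assume g: "g \<in> fst Mspace" and "0 < c"
  have scale: "meas_repr (\<lambda>k. complex_of_real c * g k) \<nu> (\<lambda>x. complex_of_real c * h x)"
    if "meas_repr g \<nu> h" for \<nu> h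
    using that unfolding meas_repr_def by (auto simp: mult.assoc)
  obtain \<nu> h where "meas_repr g \<nu> h"
    using g unfolding Mspace_def by auto
  define X where "X = {(\<integral>x. norm (h x) \<partial>\<nu>) | \<nu> h. meas_repr g \<nu> h}"
  define Y where "Y = {(\<integral>x. norm (h x) \<partial>\<nu>) | \<nu> h. meas_repr (\<lambda>k. complex_of_real c * g k) \<nu> h}"
  have "Inf Y \<le> c * Inf X"
  proof (rule le_mult_Inf)
    fix x
    assume "x \<in> X"
    then obtain \<nu> h where x: "x = (\<integral>x. norm (h x) \<partial>\<nu>)" and "meas_repr g \<nu> h"
      unfolding X_def by auto
    then have "(\<integral>y. norm (complex_of_real c * h y) \<partial>\<nu>) \<in> Y"
      unfolding Y_def mem_Collect_eq using scale by (intro exI[of _ \<nu>] exI[of _ "\<lambda>x. c * h x"]) simp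
    then have "Inf Y \<le> (\<integral>y. norm (complex_of_real c * h y) \<partial>\<nu>)"
      by (rule cInf_lower) (auto simp: Y_def intro!: bdd_belowI[where m=0])
    then show "Inf Y \<le> c * x"
      unfolding x using \<open>0 < c\<close> by (simp add: norm_mult)
  qed (use \<open>meas_repr g \<nu> h\<close> \<open>0 < c\<close> in \<open>auto simp: X_def\<close>)
  then show "(\<lambda>k. complex_of_real c * g k) \<in> fst Mspace
      \<and> snd Mspace (\<lambda>k. complex_of_real c * g k) \<le> c * snd Mspace g"
    using scale[OF \<open>meas_repr g \<nu> h\<close>] unfolding Mspace_def X_def Y_def by auto
qed

context admissible_cutoff
begin

lemma embeds_Sspace_Bspace: "embeds_with_norm (Sspace \<psi>) (Bspace :: 'd::finite dspace) (2 ^ CARD('d))"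
  unfolding embeds_with_norm_def
proof
  fix g :: "'d pdist"
  assume "g \<in> fst (Sspace \<psi>)"
  then have "tempered g" and bdd: "bdd_above (range (\<lambda>l. L1norm (block \<psi> g l)))"
    unfolding Sspace_def by auto
  define s where "s = (SUP l. L1norm (block \<psi> g l))"
  have le_s: "L1norm (block \<psi> g l) \<le> s" for l
    unfolding s_def by (rule cSUP_upper[OF _ bdd]) simp
  then have "0 \<le> s"
    using L1norm_nonneg order.trans by blast
  have g_le: "norm (g k) \<le> 2 ^ CARD('d) * s" for k
  proof -
    obtain L where L: "finite L" "card L \<le> 2 ^ CARD('d)" "(\<Sum>l\<in>L. tensor_phi \<psi> l k) = 1"
      by (rule tensor_phi_partition)
    then have "g k = (\<Sum>l\<in>L. complex_of_real (tensor_phi \<psi> l k) * g k)"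
      by (simp flip: sum_distrib_right of_real_sum)
    then have "norm (g k) \<le> (\<Sum>l\<in>L. norm (complex_of_real (tensor_phi \<psi> l k) * g k))"
      by (metis norm_sum)
    also have "\<dots> \<le> (\<Sum>l\<in>L. s)"
      by (intro sum_mono order.trans[OF norm_block_coeff_le_L1norm le_s])
    also have "\<dots> \<le> 2 ^ CARD('d) * s"
      using L(2) \<open>0 \<le> s\<close> by (simp add: mult_right_mono flip: of_nat_le_iff)
    finally show ?thesis .
  qed
  then have "bdd_above (range (\<lambda>k. norm (g k)))"
    by (intro bdd_aboveI2) auto
  moreover have "(SUP k. norm (g k)) \<le> 2 ^ CARD('d) * s"
    using g_le by (intro cSUP_least) auto
  ultimately show "g \<in> fst Bspace \<and> snd Bspace g \<le> 2 ^ CARD('d) * snd (Sspace \<psi>) g"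
    using \<open>tempered g\<close> unfolding Bspace_def Sspace_def s_def by simp
qed

lemma embeds_Mspace_Sspace: "embeds_with_norm (Mspace :: 'd::finite dspace) (Sspace \<psi>) (c_psi \<psi> ^ CARD('d))"
  unfolding embeds_with_norm_def
proof
  fix g :: "'d pdist"
  assume "g \<in> fst Mspace"
  then obtain \<nu> h where rep: "meas_repr g \<nu> h"
    unfolding Mspace_def by auto
  have "norm (g k) \<le> (\<integral>y. norm (h y) \<partial>\<nu>)" for k
  proof -
    have "g k = (\<integral>y. h y * cis (- kdot k y) \<partial>\<nu>)"
      using rep unfolding meas_repr_def by auto
    then have "norm (g k) \<le> (\<integral>y. norm (h y * cis (- kdot k y)) \<partial>\<nu>)"
      by (simp only: integral_norm_bound)
    then show ?thesis
      by (simp add: norm_mult)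
  qed
  then have "tempered g"
    unfolding tempered_def by (intro exI[where x="\<integral>y. norm (h y) \<partial>\<nu>"] exI[where x=0]) simp
  moreover have "bdd_above (range (\<lambda>l. L1norm (block \<psi> g l)))"
    using L1norm_block_le[OF rep] by (intro bdd_aboveI2) auto
  moreover define X where "X = {(\<integral>x. norm (h x) \<partial>\<nu>) | \<nu> h. meas_repr g \<nu> h}"
  have "(SUP l. L1norm (block \<psi> g l)) \<le> c_psi \<psi> ^ CARD('d) * Inf X"
  proof (rule le_mult_Inf)
    fix x
    assume "x \<in> X"
    then obtain \<nu> h where "x = (\<integral>x. norm (h x) \<partial>\<nu>)" and "meas_repr g \<nu> h"
      unfolding X_def by auto
    then show "(SUP l. L1norm (block \<psi> g l)) \<le> c_psi \<psi> ^ CARD('d) * x"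
      by (auto intro: cSUP_least L1norm_block_le)
  qed (use rep in \<open>auto simp: X_def c_psi_nonneg\<close>)
  ultimately show "g \<in> fst (Sspace \<psi>) \<and> snd (Sspace \<psi>) g \<le> c_psi \<psi> ^ CARD('d) * snd Mspace g"
    unfolding Sspace_def Mspace_def X_def by simp
qed

end

theorem lemma11:
  fixes w :: "int ^ 'd::finite \<Rightarrow> real" and \<psi> :: "real \<Rightarrow> real" and n :: nat
  assumes "\<And>k. w k > 0"
    and "(\<lambda>k. 1 / (w k)\<^sup>2) summable_on UNIV"
    and "admissible \<psi>"
    and "n \<ge> 1"
  shows "ereal (1 / c_psi \<psi> ^ CARD('d)) * approx_num n Mspace (Fspace w)
           \<le> approx_num n (Sspace \<psi>) (Fspace w)
         \<and> approx_num n (Sspace \<psi>) (Fspace w)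
           \<le> ereal (2 ^ CARD('d)) * approx_num n Bspace (Fspace w)"
proof
  interpret admissible_cutoff \<psi>
    by unfold_locales fact
  have Y: "\<And>f c. 0 < c \<Longrightarrow> snd (Fspace w) (\<lambda>k. complex_of_real c * f k) = c * snd (Fspace w) f"
    by (simp add: Fspace_norm_scale)
  show "ereal (1 / c_psi \<psi> ^ CARD('d)) * approx_num n Mspace (Fspace w) \<le> approx_num n (Sspace \<psi>) (Fspace w)"
    by (rule approx_num_div_le[OF embeds_Mspace_Sspace positively_homogeneous_Mspace _ Y Fspace_norm_nonneg
        zero_in_Sspace(1)]) (simp_all add: zero_in_Sspace(2) c_psi_nonneg)
  show "approx_num n (Sspace \<psi>) (Fspace w) \<le> ereal (2 ^ CARD('d)) * approx_num n Bspace (Fspace w)"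
    by (rule approx_num_le[OF embeds_Sspace_Bspace positively_homogeneous_Sspace _ Y]) simp
qed

end
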